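(* Let $\alpha<\tfrac12$, fix $y>0$, let $f\in\mathcal E$ and $p\in\mathbb N_0$. For every $\varepsilon>0$ there exist $\delta>0$ and $M_0>0$ such that $$\int_{E_M}|f(\xi)|\,\Bigl|\frac{\partial^p}{\partial x^p}q(x,y,\xi)\Bigr|\,\mathrm m(\xi)\,d\xi<\varepsilon\qquad\text{for all }x\in(0,\delta]\text{ and all }M\ge M_0,$$ where $E_M:=(0,\tfrac1M]\cup[M,\infty)$.
   Context: Fix $\alpha<\tfrac12$. $\mathrm m(x):=x^{1-4\alpha}e^{-1/(2x^2)}$. For $x,y,\xi>0$, $q(x,y,\xi):=(2\pi)^{-1/2}(xy\xi)^{-1+2\alpha}\exp\Bigl(\tfrac1{2x^2}+\tfrac1{2y^2}+\tfrac1{2\xi^2}-\bigl(\tfrac{x^2+y^2+\xi^2}{4xy\xi}\bigr)^2\Bigr)D_{2\alpha}\Bigl(\tfrac{x^2+y^2+\xi^2}{2xy\xi}\Bigr)$, with $D_\mu$ the parabolic cylinder function. $\mathcal E$ is the class of Lebesgue measurable $f:(0,\infty)\to\mathbb R$ such that $|f(x)|\le b_1\exp\bigl(\tfrac1{2x^2}+b_2(x^{-\beta}+x^\beta)\bigr)$ for all $x>0$, for some constants $b_1,b_2\ge0$ and $0\le\beta<2$. *)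

theory Defs
  imports "HOL-Analysis.Analysis"
begin

definition kummerM :: "real \<Rightarrow> real \<Rightarrow> real \<Rightarrow> real" where
  "kummerM a b z = (\<Sum>n. pochhammer a n / pochhammer b n * z ^ n / fact n)"

text \<open>Parabolic cylinder function D_nu(z) (Whittaker's function), via the standard
  representation valid for all real nu and z (Gradshteyn--Ryzhik 9.240):
  D_nu(z) = 2^(nu/2) e^(-z^2/4) [ sqrt pi / Gamma((1-nu)/2) M(-nu/2,1/2,z^2/2)
            - sqrt(2 pi) z / Gamma(-nu/2) M((1-nu)/2,3/2,z^2/2) ],
  with 1/Gamma the entire reciprocal Gamma function rGamma.\<close>
definition pcD :: "real \<Rightarrow> real \<Rightarrow> real" where
  "pcD \<nu> z = 2 powr (\<nu> / 2) * exp (- (z^2) / 4) *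
     (sqrt pi * rGamma ((1 - \<nu>) / 2) * kummerM (- \<nu> / 2) (1/2) (z^2 / 2)
      - sqrt (2 * pi) * z * rGamma (- \<nu> / 2) * kummerM ((1 - \<nu>) / 2) (3/2) (z^2 / 2))"

definition mm :: "real \<Rightarrow> real \<Rightarrow> real" where
  "mm \<alpha> x = x powr (1 - 4 * \<alpha>) * exp (- 1 / (2 * x^2))"

definition qq :: "real \<Rightarrow> real \<Rightarrow> real \<Rightarrow> real \<Rightarrow> real" where
  "qq \<alpha> x y \<xi> = (1 / sqrt (2 * pi)) * (x * y * \<xi>) powr (-1 + 2 * \<alpha>) *
     exp (1 / (2 * x^2) + 1 / (2 * y^2) + 1 / (2 * \<xi>^2)
          - ((x^2 + y^2 + \<xi>^2) / (4 * x * y * \<xi>))^2) *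
     pcD (2 * \<alpha>) ((x^2 + y^2 + \<xi>^2) / (2 * x * y * \<xi>))"

definition classE :: "(real \<Rightarrow> real) set" where
  "classE = {f. (\<lambda>x. indicator {0<..} x * f x) \<in> borel_measurable lebesgue \<and>
     (\<exists>b1 b2 \<beta>. b1 \<ge> 0 \<and> b2 \<ge> 0 \<and> 0 \<le> \<beta> \<and> \<beta> < 2 \<and>
        (\<forall>x>0. \<bar>f x\<bar> \<le> b1 * exp (1 / (2 * x^2) + b2 * (x powr (-\<beta>) + x powr \<beta>))))}"

definition EM :: "real \<Rightarrow> real set" where
  "EM M = {0<..1/M} \<union> {M..}"

end

theory Submission
  imports Defs
begin

text \<open>For \<open>\<nu> = 2\<alpha> < 1\<close> the parabolic cylinder function has the representation
  \<open>D\<^sub>\<nu>(z) = exp(-z\<^sup>2/4) (z K\<^sub>0(z) + K\<^sub>1(z)) / \<Gamma>(1 - \<nu>)\<close>, where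
  \<open>K\<^sub>k(z) = \<integral>\<^sub>0\<^sup>\<infinity> t\<^sup>k\<^sup>-\<^sup>\<nu> exp(-z t - t\<^sup>2/2) dt\<close>: integrating the Taylor series of \<open>(z + t) exp(-z t)\<close>
  termwise gives a power series in \<open>z\<close> whose even and odd parts are, by Legendre's duplication
  formula, the two Kummer series in the definition of \<open>D\<^sub>\<nu>\<close>.

  Hence \<open>q(x, y, \<xi>)\<close> is a finite sum of terms \<open>c x\<^sup>e \<xi>\<^sup>j exp(\<Phi>(x)) K\<^sub>k(Z(x))\<close>, a class closed under
  \<open>\<partial>/\<partial>x\<close>; since \<open>K\<^sub>k\<close> is nonnegative and decreasing on \<open>[0, \<infinity>)\<close>, the \<open>p\<close>-th derivative is bounded
  by the same sum with \<open>K\<^sub>k(Z)\<close> replaced by \<open>K\<^sub>k(0)\<close>. The exponent \<open>\<Phi>\<close> contains the cross term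
  \<open>-(y/\<xi> - \<xi>/y)\<^sup>2 / (8 x\<^sup>2)\<close>, which for small \<open>x\<close> and \<open>\<xi>\<close> far from \<open>y\<close> decays like a Gaussian both in
  \<open>1/x\<close> and in \<open>max \<xi> (1/\<xi>)\<close>. This beats the powers of \<open>x\<close> and the growth allowed for \<open>f \<in> \<E>\<close>,
  so on \<open>E\<^sub>M\<close> the integrand is at most \<open>C min 1 (1/\<xi>\<^sup>2)\<close> uniformly in small \<open>x\<close>, whose integral over
  \<open>E\<^sub>M\<close> is \<open>2C/M\<close>.\<close>

section \<open>Gaussian moments\<close>

lemma Gamma_has_integral_open:
  assumes "s > (0::real)"
  shows "((\<lambda>t. t powr (s - 1) / exp t) has_integral Gamma s) {0<..}"
proof -
  have "((\<lambda>t. t powr (s - 1) / exp t) has_integral Gamma s) {0..}"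
    by (rule Gamma_integral_real) fact
  hence "((\<lambda>t. if t \<in> {0<..} then t powr (s - 1) / exp t else 0) has_integral Gamma s) {0..}"
    by (rule has_integral_spike [of "{0}", rotated 2]) auto
  then show ?thesis
    by (subst (asm) has_integral_restrict) auto
qed

lemma powr_gauss_integrable:
  fixes s a :: real
  assumes "s > -1"
  shows "(\<lambda>t. t powr s * exp (a * t - t^2 / 2)) integrable_on {0<..}"
proof (rule measurable_bounded_by_integrable_imp_integrable)
  show "(\<lambda>t. t powr s * exp (a * t - t^2 / 2)) \<in> borel_measurable (lebesgue_on {0<..})"
    by (intro continuous_imp_measurable_on_sets_lebesgue continuous_intros) auto
  show "(\<lambda>t. exp ((a + 1)^2 / 2) * (t powr ((s + 1) - 1) / exp t)) integrable_on {0<..}"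
    using Gamma_has_integral_open[of "s + 1"] assms
    by (intro integrable_on_mult_right has_integral_integrable) auto
  show "({0<..} :: real set) \<in> sets lebesgue" by simp
  fix t :: real assume t: "t \<in> {0<..}"
  have "a * t - t^2 / 2 \<le> (a + 1)^2 / 2 - t"
    using sum_squares_ge_zero[of "t - (a + 1)" 0] by (simp add: power2_eq_square algebra_simps)
  then have "exp (a * t - t^2 / 2) \<le> exp ((a + 1)^2 / 2) / exp t"
    by (simp add: exp_diff[symmetric])
  then show "norm (t powr s * exp (a * t - t^2 / 2)) \<le> exp ((a + 1)^2 / 2) * (t powr ((s + 1) - 1) / exp t)"
    using t by (auto intro!: mult_left_mono simp: field_simps)
qed

definition gauss_moment :: "real \<Rightarrow> real" where
  "gauss_moment s = 2 powr ((s - 1) / 2) * Gamma ((s + 1) / 2)"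

lemma gauss_moment_has_integral:
  fixes s :: real
  assumes "s > -1"
  shows "((\<lambda>t. t powr s * exp (-(t^2) / 2)) has_integral gauss_moment s) {0<..}"
proof -
  define f where "f u = 2 powr ((s - 1) / 2) * (u powr ((s + 1) / 2 - 1) / exp u)" for u :: real
  have f: "(f has_integral gauss_moment s) {0<..}"
    unfolding f_def gauss_moment_def using Gamma_has_integral_open[of "(s + 1) / 2"] assms
    by (intro has_integral_mult_right) auto
  have img: "(\<lambda>t::real. t^2 / 2) ` {0<..} = {0<..}"
  proof (intro equalityI subsetI)
    fix u :: real assume "u \<in> {0<..}"
    then show "u \<in> (\<lambda>t. t^2 / 2) ` {0<..}"
      by (intro image_eqI[of _ _ "sqrt (2 * u)"]) auto
  qed auto
  have "(\<lambda>t. \<bar>t\<bar> * f (t^2 / 2)) absolutely_integrable_on {0<..} \<and>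
        integral {0<..} (\<lambda>t. \<bar>t\<bar> * f (t^2 / 2)) = gauss_moment s"
  proof (rule has_absolute_integral_change_of_variables_1'[where g' = "\<lambda>t. t" and g = "\<lambda>t. t^2 / 2" and f = f, THEN iffD2])
    show "f absolutely_integrable_on (\<lambda>t. t^2 / 2) ` {0<..} \<and> integral ((\<lambda>t. t^2 / 2) ` {0<..}) f = gauss_moment s"
    proof -
      have "f absolutely_integrable_on {0<..}"
        using f by (intro nonnegative_absolutely_integrable_1) (auto simp: f_def)
      then show ?thesis
        unfolding img using f by (simp add: integral_unique)
    qed
  next
    show "inj_on (\<lambda>t::real. t^2 / 2) {0<..}"
      by (auto simp: inj_on_def power2_eq_iff)
  qed (auto intro!: derivative_eq_intros)
  then have "((\<lambda>t. \<bar>t\<bar> * f (t^2 / 2)) has_integral gauss_moment s) {0<..}"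
    by (metis absolutely_integrable_on_def has_integral_integrable_integral)
  moreover have "\<bar>t\<bar> * f (t^2 / 2) = t powr s * exp (-(t^2) / 2)" if "t > 0" for t
  proof -
    have "(t^2 / 2) powr ((s + 1) / 2 - 1) = (t powr 2) powr ((s - 1) / 2) / 2 powr ((s - 1) / 2)"
      using that by (subst powr_divide) (auto simp: field_simps powr_realpow)
    also have "\<dots> = t powr (s - 1) / 2 powr ((s - 1) / 2)"
      by (simp add: powr_powr diff_divide_distrib)
    finally show ?thesis
      using that unfolding f_def by (simp add: exp_minus powr_diff field_simps)
  qed
  ultimately show ?thesis
    by (rule has_integral_eq[rotated]) simp
qed

lemma pos_notin_nonpos_Ints: "(x::real) > 0 \<Longrightarrow> x \<notin> \<int>\<^sub>\<le>\<^sub>0"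
  using nonpos_Ints_nonpos by force

lemma two_powr_of_nat_add: "2 powr (real j + c) = 2^j * 2 powr c"
  by (simp add: powr_add powr_realpow)

lemma gauss_moment_plus_two:
  assumes "s > -1"
  shows "gauss_moment (s + 2) = (s + 1) * gauss_moment s"
proof -
  have e: "(s + 2 - 1) / 2 = real 1 + (s - 1) / 2" "(s + 2 + 1) / 2 = (s + 1) / 2 + 1"
    by (simp_all add: field_simps)
  have "Gamma ((s + 1) / 2 + 1) = (s + 1) / 2 * Gamma ((s + 1) / 2)"
    using assms by (intro Gamma_plus1 pos_notin_nonpos_Ints) simp
  then show ?thesis
    unfolding gauss_moment_def e two_powr_of_nat_add by simp
qed

lemma gauss_moment_pochhammer:
  assumes "a > 0"
  shows "gauss_moment (2 * real k + 2 * a - 1) = 2^k * 2 powr (a - 1) * Gamma a * pochhammer a k"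
proof -
  have e: "(2 * real k + 2 * a - 1 - 1) / 2 = real k + (a - 1)" "(2 * real k + 2 * a - 1 + 1) / 2 = a + real k"
    by (simp_all add: field_simps)
  have "pochhammer a k = Gamma (a + real k) / Gamma a" "Gamma a > 0"
    using pochhammer_Gamma[OF pos_notin_nonpos_Ints[OF assms], of k] assms by simp_all
  then show ?thesis
    unfolding gauss_moment_def e two_powr_of_nat_add by simp
qed

section \<open>The functions \<open>K\<^sub>k\<close>\<close>

definition gauss_laplace :: "real \<Rightarrow> nat \<Rightarrow> real \<Rightarrow> real" where
  "gauss_laplace \<nu> k z = integral {0<..} (\<lambda>t. t powr (real k - \<nu>) * exp (-(z * t) - t^2 / 2))"

lemma gauss_laplace_integrable:
  assumes "\<nu> < 1"
  shows "(\<lambda>t. t powr (real k - \<nu>) * exp (-(z * t) - t^2 / 2)) integrable_on {0<..}"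
  using powr_gauss_integrable[of "real k - \<nu>" "-z"] assms by simp

lemma gauss_laplace_nonneg: "\<nu> < 1 \<Longrightarrow> gauss_laplace \<nu> k z \<ge> 0"
  unfolding gauss_laplace_def by (rule integral_nonneg[OF gauss_laplace_integrable]) auto

lemma gauss_laplace_le_at_zero:
  assumes "\<nu> < 1" "z \<ge> 0"
  shows "gauss_laplace \<nu> k z \<le> gauss_laplace \<nu> k 0"
  unfolding gauss_laplace_def
proof (rule integral_le[OF gauss_laplace_integrable gauss_laplace_integrable])
  fix t :: real assume "t \<in> {0<..}"
  then show "t powr (real k - \<nu>) * exp (-(z * t) - t^2 / 2) \<le> t powr (real k - \<nu>) * exp (-(0 * t) - t^2 / 2)"
    using assms by (intro mult_left_mono) auto
qed (use assms in auto)

lemma abs_exp_minus_one_minus_le: "\<bar>exp (u::real) - 1 - u\<bar> \<le> exp \<bar>u\<bar> * u^2 / 2"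
proof -
  obtain \<tau> where \<tau>: "\<bar>\<tau>\<bar> \<le> \<bar>u\<bar>" "exp u = (\<Sum>m<2. u^m / fact m) + exp \<tau> / fact 2 * u^2"
    using Maclaurin_exp_le[of u 2] by blast
  then have E: "exp u - 1 - u = exp \<tau> / 2 * u^2"
    by (simp add: numeral_2_eq_2)
  have "exp \<tau> / 2 * u^2 \<le> exp \<bar>u\<bar> / 2 * u^2"
    using \<tau> by (intro mult_right_mono divide_right_mono) auto
  then show ?thesis
    unfolding E by simp
qed

lemma has_real_derivative_of_quadratic_remainder:
  fixes f :: "real \<Rightarrow> real"
  assumes "\<And>h. \<bar>h\<bar> \<le> 1 \<Longrightarrow> \<bar>f (z + h) - f z - h * D\<bar> \<le> C * h^2"
  shows "(f has_real_derivative D) (at z)"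
  unfolding DERIV_def
proof (rule LIM_zero_cancel, rule Lim_null_comparison)
  have "norm ((f (z + h) - f z) / h - D) \<le> C * \<bar>h\<bar>" if "h \<noteq> 0" "\<bar>h\<bar> \<le> 1" for h
  proof -
    have "(f (z + h) - f z) / h - D = (f (z + h) - f z - h * D) / h"
      using that by (simp add: field_simps)
    also have "\<bar>\<dots>\<bar> \<le> C * h^2 / \<bar>h\<bar>"
      unfolding abs_divide using assms[OF that(2)] that(1) by (intro divide_right_mono) auto
    also have "C * h^2 / \<bar>h\<bar> = C * \<bar>h\<bar>"
      using that(1) by (cases "h > 0") (auto simp: field_simps power2_eq_square)
    finally show ?thesis
      by simp
  qed
  moreover have "\<forall>\<^sub>F h in at (0::real). h \<noteq> 0 \<and> \<bar>h\<bar> \<le> 1"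
    unfolding eventually_at by (intro exI[of _ 1]) auto
  ultimately show "\<forall>\<^sub>F h in at 0. norm ((f (z + h) - f z) / h - D) \<le> C * \<bar>h\<bar>"
    by (auto elim: eventually_mono)
  show "((\<lambda>h. C * \<bar>h\<bar>) \<longlongrightarrow> 0) (at 0)"
    by (rule tendsto_mult_right_zero[OF tendsto_rabs_zero[OF tendsto_ident_at]])
qed

text \<open>The Taylor remainder of \<open>exp (-h t)\<close> is absorbed by the Gaussian factor, uniformly for
  \<open>\<bar>h\<bar> \<le> 1\<close>; this justifies differentiating under the integral sign.\<close>
lemma gauss_laplace_quadratic_remainder:
  fixes k :: nat and z h :: real
  assumes \<nu>: "\<nu> < 1" and h: "\<bar>h\<bar> \<le> 1"
  defines "C \<equiv> integral {0<..} (\<lambda>t. t powr (real k + 2 - \<nu>) * exp ((1 - z) * t - t^2 / 2)) / 2"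
  shows "\<bar>gauss_laplace \<nu> k (z + h) - gauss_laplace \<nu> k z - h * - gauss_laplace \<nu> (Suc k) z\<bar> \<le> C * h^2"
proof -
  define g where "g t = t powr (real k - \<nu>) * exp (-(z * t) - t^2 / 2)" for t
  define F where "F t = g t * (exp (-(h * t)) - 1 + h * t)" for t
  have shift: "t powr (real k - \<nu>) * exp (-((z + h) * t) - t^2 / 2) = g t * exp (-(h * t))" for t
    by (simp add: g_def algebra_simps flip: exp_add)
  have succ: "t powr (real (Suc k) - \<nu>) * exp (-(z * t) - t^2 / 2) = t * g t" if "t > 0" for t
    using that by (simp add: g_def add_diff_eq[symmetric] powr_add)
  have i1: "(\<lambda>t. g t * exp (-(h * t))) integrable_on {0<..}"
    using gauss_laplace_integrable[OF \<nu>, of k "z + h"] by (simp add: shift)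
  have i0: "g integrable_on {0<..}"
    using gauss_laplace_integrable[OF \<nu>, of k z] by (simp add: g_def[abs_def])
  have i2: "(\<lambda>t. t * g t) integrable_on {0<..}"
    using gauss_laplace_integrable[OF \<nu>, of "Suc k" z] by (rule integrable_eq) (use succ in auto)
  have "gauss_laplace \<nu> k (z + h) - gauss_laplace \<nu> k z - h * - gauss_laplace \<nu> (Suc k) z
      = integral {0<..} (\<lambda>t. g t * exp (-(h * t))) - integral {0<..} g + h * integral {0<..} (\<lambda>t. t * g t)"
  proof -
    have "gauss_laplace \<nu> (Suc k) z = integral {0<..} (\<lambda>t. t * g t)"
      unfolding gauss_laplace_def by (rule integral_cong) (use succ in auto)
    then show ?thesis
      unfolding gauss_laplace_def shift g_def[symmetric] by simp
  qed
  also have "\<dots> = integral {0<..} (\<lambda>t. g t * exp (-(h * t)) - g t) + integral {0<..} (\<lambda>t. h * (t * g t))"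
    by (simp add: integral_diff[OF i1 i0])
  also have "\<dots> = integral {0<..} (\<lambda>t. (g t * exp (-(h * t)) - g t) + h * (t * g t))"
    by (rule integral_add[symmetric, OF integrable_diff[OF i1 i0] integrable_on_mult_right[OF i2]])
  also have "\<dots> = integral {0<..} F"
    unfolding F_def by (rule integral_cong) (simp add: algebra_simps)
  finally have eq: "gauss_laplace \<nu> k (z + h) - gauss_laplace \<nu> k z - h * - gauss_laplace \<nu> (Suc k) z = integral {0<..} F" .
  have "norm (integral {0<..} F) \<le> integral {0<..} (\<lambda>t. h^2 / 2 * (t powr (real k + 2 - \<nu>) * exp ((1 - z) * t - t^2 / 2)))"
  proof (rule integral_norm_bound_integral)
    show "F integrable_on {0<..}"
      unfolding F_def
      using integrable_add[OF integrable_diff[OF i1 i0] integrable_on_mult_right[OF i2, of h]]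
      by (simp add: algebra_simps)
    show "(\<lambda>t. h^2 / 2 * (t powr (real k + 2 - \<nu>) * exp ((1 - z) * t - t^2 / 2))) integrable_on {0<..}"
      using powr_gauss_integrable[of "real k + 2 - \<nu>" "1 - z"] \<nu> by (intro integrable_on_mult_right) auto
  next
    fix t :: real assume "t \<in> {0<..}"
    then have t: "t > 0" by simp
    have "\<bar>-(h * t)\<bar> \<le> t" using h t by (simp add: abs_mult mult_left_le_one_le)
    then have "exp \<bar>-(h * t)\<bar> * (-(h * t))^2 / 2 \<le> exp t * (h^2 * t^2) / 2"
      by (intro divide_right_mono mult_mono) (auto simp: power_mult_distrib)
    then have "\<bar>exp (-(h * t)) - 1 + h * t\<bar> \<le> exp t * (h^2 * t^2) / 2"
      using abs_exp_minus_one_minus_le[of "-(h * t)"] by simp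
    then have "norm (F t) \<le> g t * (exp t * (h^2 * t^2) / 2)"
      unfolding F_def using t by (simp add: abs_mult g_def mult_left_mono)
    also have "\<dots> = h^2 / 2 * (t powr (real k + 2 - \<nu>) * exp ((1 - z) * t - t^2 / 2))"
      using t by (simp add: g_def powr_add powr_diff algebra_simps power2_eq_square flip: exp_add)
    finally show "norm (F t) \<le> h^2 / 2 * (t powr (real k + 2 - \<nu>) * exp ((1 - z) * t - t^2 / 2))" .
  qed
  then show ?thesis
    unfolding eq C_def by (simp add: integral_mult_right mult.commute)
qed

lemma gauss_laplace_has_real_derivative:
  assumes "\<nu> < 1"
  shows "(gauss_laplace \<nu> k has_real_derivative - gauss_laplace \<nu> (Suc k) z) (at z)"
  using gauss_laplace_quadratic_remainder[OF assms]
  by (rule has_real_derivative_of_quadratic_remainder)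

section \<open>Integral representation of \<open>D\<^sub>\<nu>\<close>\<close>

text \<open>\<open>pcD_coeff \<nu> n\<close> is the integral of \<open>t powr (-\<nu>) * lin_exp_coeff n t * exp (-t\<^sup>2/2)\<close>, i.e.\ the
  \<open>n\<close>-th Taylor coefficient of \<open>z * gauss_laplace \<nu> 0 z + gauss_laplace \<nu> 1 z\<close>.\<close>
definition pcD_coeff :: "real \<Rightarrow> nat \<Rightarrow> real" where
  "pcD_coeff \<nu> n = (-1)^n * (gauss_moment (real n + 1 - \<nu>) - real n * gauss_moment (real n - 1 - \<nu>)) / fact n"

lemma Gamma_legendre_duplication_real:
  assumes "x > (0::real)"
  shows "Gamma x * Gamma (x + 1/2) = 2 powr (1 - 2 * x) * sqrt pi * Gamma (2 * x)"
proof -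
  have of_real_eqs: "complex_of_real x + 1/2 = complex_of_real (x + 1/2)"
    "2 * complex_of_real x = complex_of_real (2 * x)"
    "(1 - complex_of_real (2 * x)) * of_real (ln 2) = complex_of_real ((1 - 2 * x) * ln 2)"
    by simp_all
  have "complex_of_real x \<notin> \<int>\<^sub>\<le>\<^sub>0" "complex_of_real x + 1/2 \<notin> \<int>\<^sub>\<le>\<^sub>0"
    unfolding of_real_eqs of_real_in_nonpos_Ints_iff using assms by (auto intro: pos_notin_nonpos_Ints)
  then have "Gamma (complex_of_real x) * Gamma (complex_of_real x + 1/2) =
      exp ((1 - 2 * complex_of_real x) * of_real (ln 2)) * of_real (sqrt pi) * Gamma (2 * complex_of_real x)"
    by (rule Gamma_legendre_duplication)
  then have "complex_of_real (Gamma x * Gamma (x + 1/2)) = complex_of_real (exp ((1 - 2 * x) * ln 2) * sqrt pi * Gamma (2 * x))"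
    unfolding of_real_eqs by (simp only: Gamma_complex_of_real exp_of_real of_real_mult[symmetric])
  then show ?thesis
    by (simp only: of_real_eq_iff) (simp add: powr_def)
qed

lemma rGamma_legendre_duplication:
  assumes "\<nu> < 1"
  shows "rGamma (1 - \<nu>) * Gamma (1 - \<nu>/2) = 2 powr \<nu> * sqrt pi * rGamma ((1 - \<nu>)/2)"
    and "rGamma (1 - \<nu>) * Gamma ((1 - \<nu>)/2) = 2 powr \<nu> * sqrt pi * rGamma (1 - \<nu>/2)"
proof -
  have d: "Gamma ((1 - \<nu>)/2) * Gamma ((1 - \<nu>)/2 + 1/2) = 2 powr (1 - 2*((1 - \<nu>)/2)) * sqrt pi * Gamma (2*((1 - \<nu>)/2))"
    by (rule Gamma_legendre_duplication_real) (use assms in simp)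
  have e1: "(1 - \<nu>)/2 + 1/2 = 1 - \<nu>/2" by (simp add: field_simps)
  have e3: "2*((1 - \<nu>)/2) = 1 - \<nu>" by simp
  have D: "Gamma ((1 - \<nu>)/2) * Gamma (1 - \<nu>/2) = 2 powr \<nu> * sqrt pi * Gamma (1 - \<nu>)"
    using d unfolding e1 e3 by simp
  have p1: "Gamma (1 - \<nu>) > 0" "Gamma ((1 - \<nu>)/2) > 0" "Gamma (1 - \<nu>/2) > 0" using assms by auto
  show "rGamma (1 - \<nu>) * Gamma (1 - \<nu>/2) = 2 powr \<nu> * sqrt pi * rGamma ((1 - \<nu>)/2)"
    using D p1 by (simp add: rGamma_inverse_Gamma field_simps)
  show "rGamma (1 - \<nu>) * Gamma ((1 - \<nu>)/2) = 2 powr \<nu> * sqrt pi * rGamma (1 - \<nu>/2)"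
    using D p1 by (simp add: rGamma_inverse_Gamma field_simps)
qed

lemma pcD_coeff_Suc:
  assumes "\<nu> < 1"
  shows "pcD_coeff \<nu> (Suc m) * fact (Suc m) = (-1)^m * \<nu> * gauss_moment (real m - \<nu>)"
proof -
  have a: "real (Suc m) + 1 - \<nu> = real m - \<nu> + 2" "real (Suc m) - 1 - \<nu> = real m - \<nu>"
    by simp_all
  have rec: "gauss_moment (real m - \<nu> + 2) = (real m - \<nu> + 1) * gauss_moment (real m - \<nu>)"
    using assms by (intro gauss_moment_plus_two) simp
  show ?thesis
    unfolding pcD_coeff_def a rec by (simp add: field_simps del: fact_Suc)
qed

lemma pcD_coeff_even:
  assumes "\<nu> < 1"
  shows "pcD_coeff \<nu> (2 * k) * fact (2 * k) = 2 powr (real k - \<nu>/2) * Gamma (1 - \<nu>/2) * pochhammer (-\<nu>/2) k"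
proof (cases k)
  case 0
  have e: "2 * real 0 + 2 * (1 - \<nu>/2) - 1 = real 0 + 1 - \<nu>" "1 - \<nu>/2 - 1 = real 0 - \<nu>/2"
    by simp_all
  show ?thesis
    using 0 gauss_moment_pochhammer[of "1 - \<nu>/2" 0] assms unfolding e pcD_coeff_def by simp
next
  case (Suc j)
  have e: "2 * real j + 2 * (1 - \<nu>/2) - 1 = real (2 * j + 1) - \<nu>" "1 - \<nu>/2 - 1 = -\<nu>/2"
    by simp_all
  have "gauss_moment (real (2 * j + 1) - \<nu>) = 2^j * 2 powr (-\<nu>/2) * Gamma (1 - \<nu>/2) * pochhammer (1 - \<nu>/2) j"
    using gauss_moment_pochhammer[of "1 - \<nu>/2" j] assms unfolding e by simp
  moreover have "pochhammer (-\<nu>/2) k = -\<nu>/2 * pochhammer (1 - \<nu>/2) j"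
    using Suc by (simp add: pochhammer_rec add_ac)
  moreover have "2 powr (real k - \<nu>/2) = 2^Suc j * 2 powr (-\<nu>/2)"
    using Suc two_powr_of_nat_add[of "Suc j" "-\<nu>/2"] by simp
  moreover have "2 * k = Suc (2 * j + 1)" using Suc by simp
  ultimately show ?thesis
    using pcD_coeff_Suc[OF assms, of "2 * j + 1"] by simp
qed

lemma pcD_coeff_odd:
  assumes "\<nu> < 1"
  shows "pcD_coeff \<nu> (2 * k + 1) * fact (2 * k + 1)
    = \<nu> * (2^k * 2 powr (-(1 + \<nu>)/2)) * Gamma ((1 - \<nu>)/2) * pochhammer ((1 - \<nu>)/2) k"
proof -
  have e: "2 * real k + 2 * ((1 - \<nu>)/2) - 1 = real (2 * k) - \<nu>" "(1 - \<nu>)/2 - 1 = -(1 + \<nu>)/2"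
    by (simp_all add: field_simps)
  have "gauss_moment (real (2 * k) - \<nu>) = 2^k * 2 powr (-(1 + \<nu>)/2) * Gamma ((1 - \<nu>)/2) * pochhammer ((1 - \<nu>)/2) k"
    using gauss_moment_pochhammer[of "(1 - \<nu>)/2" k] assms unfolding e by simp
  then show ?thesis
    using pcD_coeff_Suc[OF assms, of "2 * k"] by simp
qed

lemma pochhammer_three_halves: "pochhammer (3/2::real) k = (2 * real k + 1) * pochhammer (1/2) k"
proof -
  have "pochhammer (1/2::real) (Suc k) = 1/2 * pochhammer (3/2) k"
    by (simp add: pochhammer_rec)
  moreover have "pochhammer (1/2::real) (Suc k) = (1/2 + real k) * pochhammer (1/2) k"
    by (simp add: pochhammer_rec')
  ultimately show ?thesis by (simp add: field_simps)
qed

lemma pochhammer_half_pos: "pochhammer (1/2::real) k > 0"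
  by (rule pochhammer_pos) simp

lemma pcD_coeff_even_term:
  assumes "\<nu> < 1"
  shows "rGamma (1 - \<nu>) * pcD_coeff \<nu> (2*k) * z^(2*k) =
    (2 powr (\<nu>/2) * sqrt pi * rGamma ((1 - \<nu>)/2)) * (pochhammer (-\<nu>/2) k / pochhammer (1/2) k * (z^2/2)^k / fact k)"
proof -
  have f: "fact (2*k) = (2^(2*k) * pochhammer (1/2) k * fact k :: real)" by (rule fact_double)
  have fp: "fact (2*k) > (0::real)" by simp
  have a: "pcD_coeff \<nu> (2*k) = 2 powr (real k - \<nu>/2) * Gamma (1 - \<nu>/2) * pochhammer (-\<nu>/2) k / fact (2*k)"
    using pcD_coeff_even[OF assms, of k] fp by (simp add: field_simps)
  have d: "rGamma (1 - \<nu>) * Gamma (1 - \<nu>/2) = 2 powr \<nu> * sqrt pi * rGamma ((1 - \<nu>)/2)"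
    by (rule rGamma_legendre_duplication(1)[OF assms])
  have w1: "2 powr (real k - \<nu>/2) = 2^k * 2 powr (-\<nu>/2)"
    using two_powr_of_nat_add[of k "-\<nu>/2"] by simp
  have w2: "2 powr \<nu> = 2 powr (\<nu>/2) * 2 powr (\<nu>/2)"
    by (simp flip: powr_add)
  have w3: "2 powr (\<nu>/2) * 2 powr (-\<nu>/2) = 1"
    by (simp flip: powr_add)
  have z: "z^(2*k) = (z^2)^k" by (simp add: power_mult)
  have p4: "(2::real)^(2*k) = 2^k * 2^k" by (metis mult_2 power_add)
  have "rGamma (1 - \<nu>) * pcD_coeff \<nu> (2*k) * z^(2*k) =
     (rGamma (1 - \<nu>) * Gamma (1 - \<nu>/2)) * 2 powr (real k - \<nu>/2) * pochhammer (-\<nu>/2) k * z^(2*k) / fact (2*k)"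
    unfolding a by (simp add: algebra_simps)
  also have "\<dots> = (2 powr (\<nu>/2) * 2 powr (-\<nu>/2)) * 2 powr (\<nu>/2) * sqrt pi * rGamma ((1 - \<nu>)/2) * 2^k * pochhammer (-\<nu>/2) k * (z^2)^k / (2^k * 2^k * pochhammer (1/2) k * fact k)"
    unfolding d w1 w2 z f p4 by (simp add: algebra_simps)
  also have "\<dots> = (2 powr (\<nu>/2) * sqrt pi * rGamma ((1 - \<nu>)/2)) * (pochhammer (-\<nu>/2) k / pochhammer (1/2) k * (z^2/2)^k / fact k)"
    unfolding w3 using pochhammer_half_pos[of k] by (simp add: field_simps power_divide)
  finally show ?thesis .
qed

lemma fact_odd_pochhammer: "fact (2 * k + 1) = 4^k * pochhammer (3/2) k * (fact k :: real)"
  using fact_double[of k, where 'a = real] by (simp add: pochhammer_three_halves power_mult)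

lemma pcD_coeff_odd_term:
  assumes \<nu>: "\<nu> < 1"
  shows "rGamma (1 - \<nu>) * pcD_coeff \<nu> (2*k+1) * z^(2*k+1) =
    - (2 powr (\<nu>/2) * sqrt (2*pi) * z * rGamma (-\<nu>/2)) * (pochhammer ((1 - \<nu>)/2) k / pochhammer (3/2) k * (z^2/2)^k / fact k)"
proof -
  have r: "\<nu> * rGamma (1 - \<nu>/2) = - 2 * rGamma (-\<nu>/2)"
    using rGamma_plus1[of "-\<nu>/2"] by (simp add: field_simps)
  have "2 powr \<nu> * 2 powr (-(1 + \<nu>)/2) * 2 = 2 powr (\<nu> + -(1 + \<nu>)/2 + 1)"
    by (simp add: powr_add)
  also have "\<dots> = 2 powr (\<nu>/2 + 1/2)"
    by (rule arg_cong[where f = "\<lambda>e. 2 powr e"]) (simp add: field_simps)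
  finally have p: "2 powr \<nu> * 2 powr (-(1 + \<nu>)/2) * 2 = 2 powr (\<nu>/2) * sqrt 2"
    by (simp add: powr_add powr_half_sqrt)
  have "rGamma (1 - \<nu>) * pcD_coeff \<nu> (2*k+1) * fact (2*k+1) * z^(2*k+1)
      = rGamma (1 - \<nu>) * (pcD_coeff \<nu> (2*k+1) * fact (2*k+1)) * z^(2*k+1)"
    by (simp only: mult.assoc)
  also have "\<dots> = (rGamma (1 - \<nu>) * Gamma ((1 - \<nu>)/2)) * \<nu> * 2^k * 2 powr (-(1 + \<nu>)/2) * pochhammer ((1 - \<nu>)/2) k * z^(2*k+1)"
    unfolding pcD_coeff_odd[OF \<nu>] by (simp only: mult_ac)
  also have "\<dots> = - (2 powr \<nu> * 2 powr (-(1 + \<nu>)/2) * 2) * sqrt pi * rGamma (-\<nu>/2) * 2^k * pochhammer ((1 - \<nu>)/2) k * z^(2*k+1)"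
  proof -
    have "(rGamma (1 - \<nu>) * Gamma ((1 - \<nu>)/2)) * \<nu> * 2^k * 2 powr (-(1 + \<nu>)/2) * pochhammer ((1 - \<nu>)/2) k * z^(2*k+1)
        = 2 powr \<nu> * sqrt pi * (\<nu> * rGamma (1 - \<nu>/2)) * 2^k * 2 powr (-(1 + \<nu>)/2) * pochhammer ((1 - \<nu>)/2) k * z^(2*k+1)"
      unfolding rGamma_legendre_duplication(2)[OF \<nu>] by (simp only: mult_ac)
    then show ?thesis
      unfolding r by (simp add: algebra_simps)
  qed
  finally have E: "rGamma (1 - \<nu>) * pcD_coeff \<nu> (2*k+1) * fact (2*k+1) * z^(2*k+1)
      = - (2 powr (\<nu>/2) * sqrt 2) * sqrt pi * rGamma (-\<nu>/2) * 2^k * pochhammer ((1 - \<nu>)/2) k * z^(2*k+1)"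
    unfolding p .
  have e: "(4::real)^k = 2^k * 2^k" "z^(2*k+1) = z * (z^2)^k" "sqrt (2 * pi) = sqrt 2 * sqrt pi"
    by (simp_all add: power_mult real_sqrt_mult flip: power_mult_distrib)
  have "rGamma (1 - \<nu>) * pcD_coeff \<nu> (2*k+1) * z^(2*k+1)
      = - (2 powr (\<nu>/2) * sqrt 2) * sqrt pi * rGamma (-\<nu>/2) * 2^k * pochhammer ((1 - \<nu>)/2) k * z^(2*k+1) / fact (2*k+1)"
    using E by (simp add: field_simps del: fact_Suc)
  then show ?thesis
    using pochhammer_pos[of "3/2::real" k] unfolding fact_odd_pochhammer e
    by (simp add: field_simps power_divide)
qed

lemma kummer_series_summable:
  fixes a b w :: real
  assumes b: "b > 0"
  shows "summable (\<lambda>n. pochhammer a n / pochhammer b n * w^n / fact n)"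
proof -
  define f where "f n = pochhammer a n / pochhammer b n * w^n / fact n" for n
  define L where "L = (\<bar>a\<bar>/b + 1) * \<bar>w\<bar>"
  have step: "norm (f (Suc n)) \<le> 1/2 * norm (f n)" if n: "n \<ge> nat \<lceil>2*L\<rceil>" for n
  proof -
    have pb: "pochhammer b n > 0" using b by (intro pochhammer_pos)
    have bn: "b + real n > 0" using b by simp
    have "f (Suc n) = f n * ((a + real n) / (b + real n) * w / (real n + 1))"
      using pb bn unfolding f_def by (simp add: pochhammer_rec' fact_Suc field_simps)
    then have "norm (f (Suc n)) = norm (f n) * (\<bar>a + real n\<bar> / (b + real n) * \<bar>w\<bar> / (real n + 1))"
      using bn by (simp add: abs_mult abs_divide)
    also have "\<bar>a + real n\<bar> / (b + real n) * \<bar>w\<bar> / (real n + 1) \<le> 1/2"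
    proof -
      have "\<bar>a + real n\<bar> \<le> (\<bar>a\<bar>/b + 1) * (b + real n)"
      proof -
        have "\<bar>a\<bar> \<le> \<bar>a\<bar>/b * (b + real n)"
          using b by (simp add: field_simps mult_left_mono)
        moreover have "(\<bar>a\<bar>/b + 1) * (b + real n) = \<bar>a\<bar>/b * (b + real n) + (b + real n)"
          by (simp add: distrib_right)
        moreover have "\<bar>a + real n\<bar> \<le> \<bar>a\<bar> + real n" by simp
        ultimately show ?thesis using b by linarith
      qed
      then have "\<bar>a + real n\<bar> / (b + real n) \<le> (\<bar>a\<bar>/b + 1)"
        using bn by (simp add: divide_le_eq)
      then have "\<bar>a + real n\<bar> / (b + real n) * \<bar>w\<bar> \<le> L"
        unfolding L_def by (intro mult_right_mono) auto
      moreover have "2 * L \<le> real n + 1"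
        using n by linarith
      ultimately have "\<bar>a + real n\<bar> / (b + real n) * \<bar>w\<bar> / (real n + 1) \<le> L / (real n + 1)"
        by (intro divide_right_mono) auto
      also have "L / (real n + 1) \<le> 1/2"
        using \<open>2 * L \<le> real n + 1\<close> by (simp add: divide_le_eq)
      finally show ?thesis .
    qed
    then have "norm (f n) * (\<bar>a + real n\<bar> / (b + real n) * \<bar>w\<bar> / (real n + 1)) \<le> norm (f n) * (1/2)"
      by (intro mult_left_mono) auto
    finally show ?thesis by simp
  qed
  have "summable f"
    by (rule summable_ratio_test[of "1/2" "nat \<lceil>2*L\<rceil>"]) (use step in auto)
  then show ?thesis unfolding f_def .
qed

definition lin_exp_coeff :: "nat \<Rightarrow> real \<Rightarrow> real" where
  "lin_exp_coeff n t = (-1)^n * (t^(n+1) - real n * t^(n-1)) / fact n"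

lemma lin_exp_coeff_sums: "(\<lambda>n. lin_exp_coeff n t * z^n) sums ((z + t) * exp (-(z*t)))"
proof -
  have e: "(\<lambda>n. (-(z*t))^n / fact n) sums exp (-(z*t))"
    using exp_converges[of "-(z*t)"] by (simp add: divide_inverse mult.commute)
  have s1: "(\<lambda>n. t * ((-(z*t))^n / fact n)) sums (t * exp (-(z*t)))"
    by (rule sums_mult[OF e])
  define g where "g n = - ((-1)^n * real n * t^(n-1) * z^n / fact n)" for n
  have gs: "(\<lambda>n. g (Suc n)) = (\<lambda>n. z * ((-(z*t))^n / fact n))"
  proof
    fix n
    have "g (Suc n) = (-1)^n * (real (Suc n) / fact (Suc n)) * t^n * z^(Suc n)"
      by (simp add: g_def)
    also have "real (Suc n) / fact (Suc n) = 1 / (fact n :: real)"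
      by (simp add: fact_Suc)
    finally show "g (Suc n) = z * ((-(z*t))^n / fact n)"
      by (simp add: power_mult_distrib power_minus' algebra_simps)
  qed
  have "(\<lambda>n. g (Suc n)) sums (z * exp (-(z*t)))"
    unfolding gs by (rule sums_mult[OF e])
  then have "g sums (z * exp (-(z*t)) + g 0)"
    by (simp only: sums_Suc_iff)
  then have s2: "g sums (z * exp (-(z*t)))"
    by (simp add: g_def)
  have "(\<lambda>n. t * ((-(z*t))^n / fact n) + g n) sums (t * exp (-(z*t)) + z * exp (-(z*t)))"
    by (rule sums_add[OF s1 s2])
  moreover have "t * ((-(z*t))^n / fact n) + g n = lin_exp_coeff n t * z^n" for n
    by (simp add: lin_exp_coeff_def g_def power_mult_distrib power_minus' field_simps)
  ultimately show ?thesis by (simp add: algebra_simps)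
qed

lemma exp_partial_sum_le:
  assumes "x \<ge> (0::real)"
  shows "(\<Sum>n<N. x^n / fact n) \<le> exp x"
proof -
  have e: "(\<lambda>n. x^n / fact n) sums exp x"
    using exp_converges[of x] by (simp add: divide_inverse mult.commute)
  have "(\<Sum>n<N. x^n / fact n) \<le> suminf (\<lambda>n. x^n / fact n)"
    by (rule sum_le_suminf) (use e assms in \<open>auto simp: sums_iff\<close>)
  also have "\<dots> = exp x" using e by (simp add: sums_iff)
  finally show ?thesis .
qed

lemma lin_exp_partial_sum_bound:
  assumes t: "t \<ge> 0"
  shows "\<bar>\<Sum>n<N. lin_exp_coeff n t * z^n\<bar> \<le> (t + \<bar>z\<bar>) * exp (\<bar>z\<bar> * t)"
proof -
  define h where "h n = real n * t^(n-1) * \<bar>z\<bar>^n / fact n" for n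
  have "\<bar>\<Sum>n<N. lin_exp_coeff n t * z^n\<bar> \<le> (\<Sum>n<N. \<bar>lin_exp_coeff n t * z^n\<bar>)"
    by (rule sum_abs)
  also have "\<dots> \<le> (\<Sum>n<N. t * ((\<bar>z\<bar>*t)^n / fact n) + h n)"
  proof (rule sum_mono)
    fix n assume "n \<in> {..<N}"
    have "\<bar>t^(n+1) - real n * t^(n-1)\<bar> \<le> t^(n+1) + real n * t^(n-1)"
      using t by (simp add: abs_le_iff)
    then have "\<bar>t^(n+1) - real n * t^(n-1)\<bar> * \<bar>z\<bar>^n / fact n \<le> (t^(n+1) + real n * t^(n-1)) * \<bar>z\<bar>^n / fact n"
      by (intro divide_right_mono mult_right_mono) auto
    moreover have "\<bar>lin_exp_coeff n t * z^n\<bar> = \<bar>t^(n+1) - real n * t^(n-1)\<bar> * \<bar>z\<bar>^n / fact n"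
      by (simp add: lin_exp_coeff_def abs_mult power_abs abs_divide)
    moreover have "(t^(n+1) + real n * t^(n-1)) * \<bar>z\<bar>^n / fact n = t * ((\<bar>z\<bar>*t)^n / fact n) + h n"
      by (simp add: h_def power_mult_distrib field_simps)
    ultimately show "\<bar>lin_exp_coeff n t * z^n\<bar> \<le> t * ((\<bar>z\<bar>*t)^n / fact n) + h n"
      by simp
  qed
  also have "\<dots> = t * (\<Sum>n<N. (\<bar>z\<bar>*t)^n / fact n) + (\<Sum>n<N. h n)"
    by (simp add: sum.distrib sum_distrib_left)
  also have "(\<Sum>n<N. h n) \<le> \<bar>z\<bar> * exp (\<bar>z\<bar> * t)"
  proof -
    have "(\<Sum>n<N. h n) \<le> (\<Sum>n<Suc N. h n)"
      by (simp add: h_def t)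
    also have "\<dots> = h 0 + (\<Sum>n<N. h (Suc n))"
      by (rule sum.lessThan_Suc_shift)
    also have "\<dots> = \<bar>z\<bar> * (\<Sum>n<N. (\<bar>z\<bar>*t)^n / fact n)"
    proof -
      have hs: "h (Suc n) = \<bar>z\<bar> * ((\<bar>z\<bar>*t)^n / fact n)" for n
      proof -
        have "h (Suc n) = (real (Suc n) / fact (Suc n)) * t^n * \<bar>z\<bar>^(Suc n)"
          by (simp add: h_def)
        also have "real (Suc n) / fact (Suc n) = 1 / (fact n :: real)"
          by (simp add: fact_Suc)
        finally show ?thesis by (simp add: power_mult_distrib)
      qed
      have "h 0 + (\<Sum>n<N. h (Suc n)) = (\<Sum>n<N. \<bar>z\<bar> * ((\<bar>z\<bar>*t)^n / fact n))"
        unfolding hs by (simp add: h_def)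
      then show ?thesis by (simp add: sum_distrib_left)
    qed
    also have "\<dots> \<le> \<bar>z\<bar> * exp (\<bar>z\<bar> * t)"
      by (intro mult_left_mono exp_partial_sum_le) (use t in auto)
    finally show ?thesis .
  qed
  also have "t * (\<Sum>n<N. (\<bar>z\<bar>*t)^n / fact n) \<le> t * exp (\<bar>z\<bar> * t)"
    by (intro mult_left_mono exp_partial_sum_le) (use t in auto)
  finally show ?thesis by (simp add: algebra_simps)
qed

lemma powr_mult_power: "(t::real) > 0 \<Longrightarrow> t powr a * t^m = t powr (a + real m)"
  by (simp add: powr_add powr_realpow)

lemma lin_exp_coeff_has_integral:
  assumes \<nu>: "\<nu> < 1"
  shows "((\<lambda>t. t powr (-\<nu>) * lin_exp_coeff n t * exp (-(t^2)/2)) has_integral pcD_coeff \<nu> n) {0<..}"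
proof -
  have p1: "t powr (-\<nu>) * t^(n+1) = t powr (real n + 1 - \<nu>)" if "t > 0" for t
  proof -
    have e: "real n + 1 - \<nu> = -\<nu> + real (n+1)" by simp
    show ?thesis unfolding e by (rule powr_mult_power[OF that])
  qed
  have i1: "((\<lambda>t. t powr (real n + 1 - \<nu>) * exp (-(t^2)/2)) has_integral gauss_moment (real n + 1 - \<nu>)) {0<..}"
    by (rule gauss_moment_has_integral) (use \<nu> in simp)
  show ?thesis
  proof (cases n)
    case 0
    have "((\<lambda>t. t powr (real n + 1 - \<nu>) * exp (-(t^2)/2)) has_integral pcD_coeff \<nu> n) {0<..}"
      using i1 0 by (simp add: pcD_coeff_def)
    then show ?thesis
      by (rule has_integral_eq[rotated]) (use p1 0 in \<open>auto simp: lin_exp_coeff_def\<close>)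
  next
    case (Suc m)
    have p2: "t powr (-\<nu>) * t^(n-1) = t powr (real n - 1 - \<nu>)" if "t > 0" for t
    proof -
      have e: "real n - 1 - \<nu> = -\<nu> + real (n-1)" using Suc by simp
      show ?thesis unfolding e by (rule powr_mult_power[OF that])
    qed
    have i2: "((\<lambda>t. t powr (real n - 1 - \<nu>) * exp (-(t^2)/2)) has_integral gauss_moment (real n - 1 - \<nu>)) {0<..}"
      by (rule gauss_moment_has_integral) (use \<nu> Suc in simp)
    have "((\<lambda>t. (-1)^n / fact n * (t powr (real n + 1 - \<nu>) * exp (-(t^2)/2) - real n * (t powr (real n - 1 - \<nu>) * exp (-(t^2)/2))))
       has_integral ((-1)^n / fact n * (gauss_moment (real n + 1 - \<nu>) - real n * gauss_moment (real n - 1 - \<nu>)))) {0<..}"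
      by (intro has_integral_mult_right has_integral_diff i1 i2)
    then have "((\<lambda>t. (-1)^n / fact n * (t powr (real n + 1 - \<nu>) * exp (-(t^2)/2) - real n * (t powr (real n - 1 - \<nu>) * exp (-(t^2)/2))))
       has_integral pcD_coeff \<nu> n) {0<..}"
      by (simp add: pcD_coeff_def)
    then show ?thesis
    proof (rule has_integral_eq[rotated])
      fix t :: real assume "t \<in> {0<..}"
      then have t: "t > 0" by simp
      have "t powr (-\<nu>) * lin_exp_coeff n t * exp (-(t^2)/2) = (-1)^n / fact n * ((t powr (-\<nu>) * t^(n+1)) * exp (-(t^2)/2) - real n * ((t powr (-\<nu>) * t^(n-1)) * exp (-(t^2)/2)))"
        by (simp add: lin_exp_coeff_def field_simps)
      also have "\<dots> = (-1)^n / fact n * (t powr (real n + 1 - \<nu>) * exp (-(t^2)/2) - real n * (t powr (real n - 1 - \<nu>) * exp (-(t^2)/2)))"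
        using p1[OF t] p2[OF t] by simp
      finally show "(-1)^n / fact n * (t powr (real n + 1 - \<nu>) * exp (-(t^2)/2) - real n * (t powr (real n - 1 - \<nu>) * exp (-(t^2)/2))) = t powr (-\<nu>) * lin_exp_coeff n t * exp (-(t^2)/2)"
        by simp
    qed
  qed
qed

lemma lin_exp_partial_sum_has_integral:
  assumes \<nu>: "\<nu> < 1"
  shows "((\<lambda>t. t powr (-\<nu>) * (\<Sum>n<N. lin_exp_coeff n t * z^n) * exp (-(t^2)/2)) has_integral (\<Sum>n<N. pcD_coeff \<nu> n * z^n)) {0<..}"
proof -
  have "((\<lambda>t. \<Sum>n<N. t powr (-\<nu>) * lin_exp_coeff n t * exp (-(t^2)/2) * z^n) has_integral (\<Sum>n<N. pcD_coeff \<nu> n * z^n)) {0<..}"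
    by (intro has_integral_sum finite_lessThan has_integral_mult_left lin_exp_coeff_has_integral \<nu>)
  then show ?thesis
    by (rule has_integral_eq[rotated]) (simp add: sum_distrib_left sum_distrib_right algebra_simps)
qed

lemma integral_lin_exp_gauss:
  assumes \<nu>: "\<nu> < 1"
  shows "integral {0<..} (\<lambda>t. t powr (-\<nu>) * (z + t) * exp (-(z * t) - t^2 / 2))
    = z * gauss_laplace \<nu> 0 z + gauss_laplace \<nu> 1 z"
proof -
  have "integral {0<..} (\<lambda>t. t powr (-\<nu>) * (z + t) * exp (-(z * t) - t^2 / 2))
      = integral {0<..} (\<lambda>t. z * (t powr (real 0 - \<nu>) * exp (-(z * t) - t^2 / 2))
                              + t powr (real 1 - \<nu>) * exp (-(z * t) - t^2 / 2))"
  proof (rule integral_cong)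
    fix t :: real assume "t \<in> {0<..}"
    then have "t powr (1 - \<nu>) = t * t powr (-\<nu>)" by (simp add: powr_diff powr_minus field_simps)
    then show "t powr (-\<nu>) * (z + t) * exp (-(z * t) - t^2 / 2)
        = z * (t powr (real 0 - \<nu>) * exp (-(z * t) - t^2 / 2)) + t powr (real 1 - \<nu>) * exp (-(z * t) - t^2 / 2)"
      by (simp add: algebra_simps)
  qed
  also have "\<dots> = z * gauss_laplace \<nu> 0 z + gauss_laplace \<nu> 1 z"
    unfolding gauss_laplace_def integral_mult_right[symmetric]
    by (rule integral_add[OF integrable_on_mult_right gauss_laplace_integrable[OF \<nu>]])
      (rule gauss_laplace_integrable[OF \<nu>])
  finally show ?thesis .
qed

text \<open>Termwise integration of \<open>(z + t) exp (-z t) = (\<Sum>n. lin_exp_coeff n t * z^n)\<close> against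
  \<open>t powr (-\<nu>) * exp (-t\<^sup>2/2)\<close>, justified by dominated convergence.\<close>
lemma pcD_coeff_sums:
  assumes \<nu>: "\<nu> < 1"
  shows "(\<lambda>n. pcD_coeff \<nu> n * z^n) sums (z * gauss_laplace \<nu> 0 z + gauss_laplace \<nu> 1 z)"
proof -
  define f where "f N t = t powr (-\<nu>) * (\<Sum>n<N. lin_exp_coeff n t * z^n) * exp (-(t^2) / 2)" for N t
  define h where "h t = t powr (1 - \<nu>) * exp (\<bar>z\<bar> * t - t^2 / 2) + \<bar>z\<bar> * (t powr (-\<nu>) * exp (\<bar>z\<bar> * t - t^2 / 2))" for t
  define g where "g t = t powr (-\<nu>) * (z + t) * exp (-(z * t) - t^2 / 2)" for t
  have f_int: "((f N) has_integral (\<Sum>n<N. pcD_coeff \<nu> n * z^n)) {0<..}" for N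
    unfolding f_def by (rule lin_exp_partial_sum_has_integral[OF \<nu>])
  have "h integrable_on {0<..}"
    unfolding h_def
    by (intro integrable_add integrable_on_mult_right powr_gauss_integrable) (use \<nu> in auto)
  moreover have "norm (f N t) \<le> h t" if "t \<in> {0<..}" for N t
  proof -
    have t: "t > 0" using that by simp
    have "norm (f N t) = t powr (-\<nu>) * \<bar>\<Sum>n<N. lin_exp_coeff n t * z^n\<bar> * exp (-(t^2) / 2)"
      by (simp add: f_def abs_mult)
    also have "\<dots> \<le> t powr (-\<nu>) * ((t + \<bar>z\<bar>) * exp (\<bar>z\<bar> * t)) * exp (-(t^2) / 2)"
      by (intro mult_right_mono mult_left_mono lin_exp_partial_sum_bound) (use t in auto)
    also have "\<dots> = h t"
      using t by (simp add: h_def powr_diff powr_minus field_simps flip: exp_add)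
    finally show ?thesis .
  qed
  moreover have "(\<lambda>N. f N t) \<longlonglongrightarrow> g t" for t
  proof -
    have "(\<lambda>N. t powr (-\<nu>) * (\<Sum>n<N. lin_exp_coeff n t * z^n) * exp (-(t^2) / 2))
        \<longlonglongrightarrow> t powr (-\<nu>) * ((z + t) * exp (-(z * t))) * exp (-(t^2) / 2)"
      using lin_exp_coeff_sums[of t z] unfolding sums_def by (intro tendsto_intros)
    then show ?thesis
      unfolding f_def g_def by (simp add: algebra_simps flip: exp_add)
  qed
  ultimately have "(\<lambda>N. integral {0<..} (f N)) \<longlonglongrightarrow> integral {0<..} g"
    using has_integral_integrable[OF f_int] by (intro dominated_convergence(2)) auto
  moreover have "integral {0<..} (f N) = (\<Sum>n<N. pcD_coeff \<nu> n * z^n)" for N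
    using f_int by (rule integral_unique)
  ultimately show ?thesis
    unfolding sums_def g_def integral_lin_exp_gauss[OF \<nu>] by simp
qed

theorem pcD_eq_gauss_laplace:
  assumes \<nu>: "\<nu> < 1"
  shows "pcD \<nu> z = exp (-(z^2) / 4) * rGamma (1 - \<nu>) * (z * gauss_laplace \<nu> 0 z + gauss_laplace \<nu> 1 z)"
proof -
  define J where "J = z * gauss_laplace \<nu> 0 z + gauss_laplace \<nu> 1 z"
  define f where "f n = rGamma (1 - \<nu>) * pcD_coeff \<nu> n * z^n" for n
  define A where "A = 2 powr (\<nu>/2) * sqrt pi * rGamma ((1 - \<nu>)/2)"
  define B where "B = 2 powr (\<nu>/2) * sqrt (2*pi) * z * rGamma (-\<nu>/2)"
  define u where "u k = pochhammer (-\<nu>/2) k / pochhammer (1/2) k * (z^2/2)^k / fact k" for k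
  define v where "v k = pochhammer ((1 - \<nu>)/2) k / pochhammer (3/2) k * (z^2/2)^k / fact k" for k
  have "f sums (rGamma (1 - \<nu>) * J)"
    unfolding f_def J_def using sums_mult[OF pcD_coeff_sums[OF \<nu>], of "rGamma (1 - \<nu>)"]
    by (simp add: mult.assoc)
  then have grouped: "(\<lambda>n. sum f {n * 2..<n * 2 + 2}) sums (rGamma (1 - \<nu>) * J)"
    by (rule sums_group) simp
  have "sum f {n * 2..<n * 2 + 2} = A * u n - B * v n" for n
  proof -
    have "{n * 2..<n * 2 + 2} = {2 * n, 2 * n + 1}" by auto
    then show ?thesis
      using pcD_coeff_even_term[OF \<nu>, of n z] pcD_coeff_odd_term[OF \<nu>, of n z]
      by (simp add: f_def A_def B_def u_def v_def)
  qed
  moreover have "u sums kummerM (-\<nu>/2) (1/2) (z^2/2)"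
    unfolding u_def kummerM_def by (rule summable_sums[OF kummer_series_summable]) simp
  moreover have "v sums kummerM ((1 - \<nu>)/2) (3/2) (z^2/2)"
    unfolding v_def kummerM_def by (rule summable_sums[OF kummer_series_summable]) simp
  ultimately have "(\<lambda>n. sum f {n * 2..<n * 2 + 2})
      sums (A * kummerM (-\<nu>/2) (1/2) (z^2/2) - B * kummerM ((1 - \<nu>)/2) (3/2) (z^2/2))"
    by (simp only:) (intro sums_diff sums_mult)
  with grouped have "rGamma (1 - \<nu>) * J = A * kummerM (-\<nu>/2) (1/2) (z^2/2) - B * kummerM ((1 - \<nu>)/2) (3/2) (z^2/2)"
    by (rule sums_unique2)
  moreover have "pcD \<nu> z = exp (-(z^2) / 4) * (A * kummerM (-\<nu>/2) (1/2) (z^2/2) - B * kummerM ((1 - \<nu>)/2) (3/2) (z^2/2))"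
    unfolding pcD_def A_def B_def by (simp add: algebra_simps)
  ultimately show ?thesis
    unfolding J_def by simp
qed

section \<open>Derivatives of \<open>q\<close> in \<open>x\<close>\<close>

definition pcD_arg :: "real \<Rightarrow> real \<Rightarrow> real \<Rightarrow> real" where
  "pcD_arg y \<xi> x = (x^2 + y^2 + \<xi>^2) / (2 * x * y * \<xi>)"

definition q_exponent :: "real \<Rightarrow> real \<Rightarrow> real \<Rightarrow> real" where
  "q_exponent y \<xi> x = 1 / (2 * x^2) + 1 / (2 * y^2) + 1 / (2 * \<xi>^2) - (pcD_arg y \<xi> x)^2 / 2"

text \<open>A term \<open>(c, e, j, k)\<close> stands for the function
  \<open>x \<mapsto> c x\<^sup>e \<xi>\<^sup>j exp (q_exponent y \<xi> x) K\<^sub>k (pcD_arg y \<xi> x)\<close> with \<open>K\<^sub>k = gauss_laplace \<nu> k\<close>.\<close>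
type_synonym qterm = "real \<times> real \<times> real \<times> nat"

definition qterm_val :: "real \<Rightarrow> real \<Rightarrow> real \<Rightarrow> qterm \<Rightarrow> real \<Rightarrow> real" where
  "qterm_val \<nu> y \<xi> t x = (case t of (c, e, j, k) \<Rightarrow>
     c * x powr e * \<xi> powr j * exp (q_exponent y \<xi> x) * gauss_laplace \<nu> k (pcD_arg y \<xi> x))"

definition qterms_val :: "real \<Rightarrow> real \<Rightarrow> real \<Rightarrow> qterm list \<Rightarrow> real \<Rightarrow> real" where
  "qterms_val \<nu> y \<xi> L x = sum_list (map (\<lambda>t. qterm_val \<nu> y \<xi> t x) L)"

definition qterm_deriv :: "real \<Rightarrow> qterm \<Rightarrow> qterm list" where
  "qterm_deriv y t = (case t of (c, e, j, k) \<Rightarrow>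
     [(c * e, e - 1, j, k), (-c / 2, e - 3, j, k), (-c / (4 * y^2), e + 1, j - 2, k),
      (c * y^2 / 4, e - 3, j - 2, k), (c / (4 * y^2), e - 3, j + 2, k),
      (-c / (2 * y), e, j - 1, Suc k), (c * y / 2, e - 2, j - 1, Suc k), (c / (2 * y), e - 2, j + 1, Suc k)])"

definition qterms_deriv :: "real \<Rightarrow> qterm list \<Rightarrow> qterm list" where
  "qterms_deriv y L = concat (map (qterm_deriv y) L)"

lemma pcD_arg_pos: "x > 0 \<Longrightarrow> y > 0 \<Longrightarrow> \<xi> > 0 \<Longrightarrow> pcD_arg y \<xi> x > 0"
  unfolding pcD_arg_def by (intro divide_pos_pos add_pos_nonneg) auto

lemma pcD_arg_has_real_derivative:
  assumes "x > 0" "y > 0" "\<xi> > 0"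
  shows "(pcD_arg y \<xi> has_real_derivative (1 / (2 * y * \<xi>) - y / (2 * x^2 * \<xi>) - \<xi> / (2 * x^2 * y))) (at x)"
  unfolding pcD_arg_def[abs_def]
  using assms by (auto intro!: derivative_eq_intros simp: field_simps power2_eq_square)

lemma q_exponent_has_real_derivative:
  assumes "x > 0" "y > 0" "\<xi> > 0"
  shows "(q_exponent y \<xi> has_real_derivative
     (-1 / (2 * x^3) - x / (4 * y^2 * \<xi>^2) + y^2 / (4 * x^3 * \<xi>^2) + \<xi>^2 / (4 * x^3 * y^2))) (at x)"
  unfolding q_exponent_def[abs_def]
  using assms
  by (auto intro!: derivative_eq_intros pcD_arg_has_real_derivative
      simp: pcD_arg_def field_simps power2_eq_square power3_eq_cube)

lemma qterm_val_has_real_derivative: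
  assumes x: "x > 0" and y: "y > 0" and \<xi>: "\<xi> > 0" and \<nu>: "\<nu> < 1"
  shows "(qterm_val \<nu> y \<xi> t has_real_derivative qterms_val \<nu> y \<xi> (qterm_deriv y t) x) (at x)"
proof -
  obtain c e j k where t: "t = (c, e, j, k)" by (cases t) auto
  define E where "E = exp (q_exponent y \<xi> x)"
  define K0 where "K0 = gauss_laplace \<nu> k (pcD_arg y \<xi> x)"
  define K1 where "K1 = gauss_laplace \<nu> (Suc k) (pcD_arg y \<xi> x)"
  have D: "(qterm_val \<nu> y \<xi> t has_real_derivative
      c * (e * x powr (e - 1)) * \<xi> powr j * E * K0
      + c * x powr e * \<xi> powr j * (E * (-1 / (2 * x^3) - x / (4 * y^2 * \<xi>^2) + y^2 / (4 * x^3 * \<xi>^2) + \<xi>^2 / (4 * x^3 * y^2))) * K0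
      + c * x powr e * \<xi> powr j * E * (- K1 * (1 / (2 * y * \<xi>) - y / (2 * x^2 * \<xi>) - \<xi> / (2 * x^2 * y)))) (at x)"
    unfolding qterm_val_def t E_def K0_def K1_def prod.case
    using x
    by (auto intro!: derivative_eq_intros q_exponent_has_real_derivative[OF x y \<xi>]
        DERIV_chain2[OF gauss_laplace_has_real_derivative[OF \<nu>] pcD_arg_has_real_derivative[OF x y \<xi>]]
        simp: algebra_simps)
  have r: "qterms_val \<nu> y \<xi> (qterm_deriv y t) x =
     c * e * x powr (e - 1) * \<xi> powr j * E * K0 + (-c / 2) * x powr (e - 3) * \<xi> powr j * E * K0
   + (-c / (4 * y^2)) * x powr (e + 1) * \<xi> powr (j - 2) * E * K0 + (c * y^2 / 4) * x powr (e - 3) * \<xi> powr (j - 2) * E * K0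
   + (c / (4 * y^2)) * x powr (e - 3) * \<xi> powr (j + 2) * E * K0 + (-c / (2 * y)) * x powr e * \<xi> powr (j - 1) * E * K1
   + (c * y / 2) * x powr (e - 2) * \<xi> powr (j - 1) * E * K1 + (c / (2 * y)) * x powr (e - 2) * \<xi> powr (j + 1) * E * K1"
    unfolding E_def K0_def K1_def by (simp add: qterms_val_def qterm_deriv_def qterm_val_def t)
  show ?thesis
    unfolding r
    by (rule DERIV_cong[OF D])
      (use x y \<xi> in \<open>simp add: powr_diff powr_add powr_numeral field_simps power2_eq_square power3_eq_cube\<close>)
qed

lemma qterms_val_has_real_derivative:
  assumes "x > 0" "y > 0" "\<xi> > 0" "\<nu> < 1"
  shows "(qterms_val \<nu> y \<xi> L has_real_derivative qterms_val \<nu> y \<xi> (qterms_deriv y L) x) (at x)"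
proof (induction L)
  case Nil
  then show ?case by (simp add: qterms_val_def qterms_deriv_def)
next
  case (Cons t L)
  have "qterms_val \<nu> y \<xi> (t # L) = (\<lambda>x. qterm_val \<nu> y \<xi> t x + qterms_val \<nu> y \<xi> L x)"
    by (simp add: qterms_val_def fun_eq_iff)
  moreover have "qterms_val \<nu> y \<xi> (qterms_deriv y (t # L)) x
      = qterms_val \<nu> y \<xi> (qterm_deriv y t) x + qterms_val \<nu> y \<xi> (qterms_deriv y L) x"
    by (simp add: qterms_val_def qterms_deriv_def)
  ultimately show ?case
    using DERIV_add[OF qterm_val_has_real_derivative[OF assms] Cons.IH] by simp
qed

lemma higher_deriv_eq_on_open:
  fixes F :: "real \<Rightarrow> real" and G :: "nat \<Rightarrow> real \<Rightarrow> real"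
  assumes "open S" and "\<And>x. x \<in> S \<Longrightarrow> F x = G 0 x"
    and "\<And>n x. x \<in> S \<Longrightarrow> (G n has_real_derivative G (Suc n) x) (at x)"
  shows "x \<in> S \<Longrightarrow> (deriv ^^ p) F x = G p x"
proof (induction p arbitrary: x)
  case 0
  then show ?case using assms(2) by simp
next
  case (Suc p)
  have "eventually (\<lambda>u. (deriv ^^ p) F u = G p u) (nhds x)"
    using eventually_nhds_in_open[OF assms(1) Suc.prems] by eventually_elim (use Suc.IH in auto)
  then have "deriv ((deriv ^^ p) F) x = deriv (G p) x"
    by (rule deriv_cong_ev) simp
  also have "\<dots> = G (Suc p) x"
    by (rule DERIV_imp_deriv[OF assms(3)[OF Suc.prems]])
  finally show ?case by simp
qed

lemma higher_deriv_qterms_val: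
  assumes "y > 0" "\<xi> > 0" "\<nu> < 1" "x > 0"
    and "\<And>x. x > 0 \<Longrightarrow> F x = qterms_val \<nu> y \<xi> L x"
  shows "(deriv ^^ p) F x = qterms_val \<nu> y \<xi> ((qterms_deriv y ^^ p) L) x"
  using assms
  by (intro higher_deriv_eq_on_open[where S = "{0<..}" and G = "\<lambda>n. qterms_val \<nu> y \<xi> ((qterms_deriv y ^^ n) L)"])
    (auto intro: qterms_val_has_real_derivative)

definition qterms_majorant :: "real \<Rightarrow> real \<Rightarrow> real \<Rightarrow> qterm list \<Rightarrow> real \<Rightarrow> real" where
  "qterms_majorant \<nu> y \<xi> L x =
     sum_list (map (\<lambda>(c, e, j, k). \<bar>c\<bar> * x powr e * \<xi> powr j * exp (q_exponent y \<xi> x) * gauss_laplace \<nu> k 0) L)"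

lemma abs_qterms_val_le_majorant:
  assumes x: "x > 0" and y: "y > 0" and \<xi>: "\<xi> > 0" and \<nu>: "\<nu> < 1"
  shows "\<bar>qterms_val \<nu> y \<xi> L x\<bar> \<le> qterms_majorant \<nu> y \<xi> L x"
proof (induction L)
  case Nil
  then show ?case by (simp add: qterms_val_def qterms_majorant_def)
next
  case (Cons t L)
  obtain c e j k where t: "t = (c, e, j, k)" by (cases t) auto
  have "\<bar>qterm_val \<nu> y \<xi> t x\<bar>
      = \<bar>c\<bar> * x powr e * \<xi> powr j * exp (q_exponent y \<xi> x) * gauss_laplace \<nu> k (pcD_arg y \<xi> x)"
    using gauss_laplace_nonneg[OF \<nu>] by (simp add: qterm_val_def t abs_mult)
  also have "\<dots> \<le> \<bar>c\<bar> * x powr e * \<xi> powr j * exp (q_exponent y \<xi> x) * gauss_laplace \<nu> k 0"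
    using pcD_arg_pos[OF x y \<xi>] by (intro mult_left_mono gauss_laplace_le_at_zero \<nu>) auto
  finally show ?case
    using Cons.IH abs_triangle_ineq[of "qterm_val \<nu> y \<xi> t x" "qterms_val \<nu> y \<xi> L x"]
    by (simp add: qterms_val_def qterms_majorant_def t)
qed

definition q_terms :: "real \<Rightarrow> real \<Rightarrow> qterm list" where
  "q_terms \<alpha> y = (let a = 2 * \<alpha> - 1; C = 1 / sqrt (2 * pi) * y powr a * rGamma (1 - 2 * \<alpha>) in
     [(C / (2 * y), a + 1, a - 1, 0), (C * y / 2, a - 1, a - 1, 0), (C / (2 * y), a - 1, a + 1, 0), (C, a, a, 1)])"

lemma qq_eq_qterms_val:
  assumes \<alpha>: "\<alpha> < 1/2" and x: "x > 0" and y: "y > 0" and \<xi>: "\<xi> > 0"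
  shows "qq \<alpha> x y \<xi> = qterms_val (2 * \<alpha>) y \<xi> (q_terms \<alpha> y) x"
proof -
  define a where "a = 2 * \<alpha> - 1"
  define C where "C = 1 / sqrt (2 * pi) * y powr a * rGamma (1 - 2 * \<alpha>)"
  define Z where "Z = pcD_arg y \<xi> x"
  define E where "E = exp (q_exponent y \<xi> x)"
  define K0 where "K0 = gauss_laplace (2 * \<alpha>) 0 Z"
  define K1 where "K1 = gauss_laplace (2 * \<alpha>) 1 Z"
  have \<nu>: "2 * \<alpha> < 1" using \<alpha> by simp
  have Zd: "(x^2 + y^2 + \<xi>^2) / (2 * x * y * \<xi>) = Z"
    unfolding Z_def pcD_arg_def ..
  have Zh: "(x^2 + y^2 + \<xi>^2) / (4 * x * y * \<xi>) = Z / 2"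
    unfolding Z_def pcD_arg_def by (simp add: field_simps)
  have Ee: "exp (1 / (2 * x^2) + 1 / (2 * y^2) + 1 / (2 * \<xi>^2) - (Z / 2)^2) * exp (-(Z^2) / 4) = E"
    unfolding E_def q_exponent_def Z_def[symmetric] by (simp add: field_simps power2_eq_square flip: exp_add)
  have Pe: "(x * y * \<xi>) powr a = x powr a * y powr a * \<xi> powr a"
    using x y \<xi> by (simp add: powr_mult)
  have "qq \<alpha> x y \<xi> = 1 / sqrt (2 * pi) * (x * y * \<xi>) powr a
      * (exp (1 / (2 * x^2) + 1 / (2 * y^2) + 1 / (2 * \<xi>^2) - (Z / 2)^2) * exp (-(Z^2) / 4))
      * rGamma (1 - 2 * \<alpha>) * (Z * K0 + K1)"
    unfolding qq_def Zd Zh pcD_eq_gauss_laplace[OF \<nu>] by (simp add: a_def K0_def K1_def algebra_simps)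
  also have "\<dots> = C * x powr a * \<xi> powr a * E * (Z * K0 + K1)"
    unfolding Ee Pe C_def by (simp add: algebra_simps)
  also have "Z = x / (2 * y * \<xi>) + y / (2 * x * \<xi>) + \<xi> / (2 * x * y)"
    unfolding Z_def pcD_arg_def using x y \<xi> by (simp add: field_simps power2_eq_square)
  also have "C * x powr a * \<xi> powr a * E * ((x / (2 * y * \<xi>) + y / (2 * x * \<xi>) + \<xi> / (2 * x * y)) * K0 + K1)
      = qterms_val (2 * \<alpha>) y \<xi> (q_terms \<alpha> y) x"
    unfolding qterms_val_def qterm_val_def q_terms_def Let_def a_def[symmetric] C_def[symmetric]
      E_def[symmetric] Z_def[symmetric]
    using x y \<xi> by (simp add: K0_def K1_def powr_diff powr_add field_simps power2_eq_square)
  finally show ?thesis .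
qed

section \<open>Growth estimates\<close>

lemma powr_le_half_quadratic_plus_const:
  fixes b c \<beta> :: real
  assumes c: "c > 0" and b: "b \<ge> 0" and \<beta>: "0 \<le> \<beta>" "\<beta> < 2"
  shows "\<exists>K. \<forall>s\<ge>1. b * s powr \<beta> \<le> c / 2 * s^2 + K"
proof -
  define R where "R = max 1 ((2 * b / c) powr (1 / (2 - \<beta>)))"
  have R1: "R \<ge> 1" by (simp add: R_def)
  have "b * s powr \<beta> \<le> c / 2 * s^2 + b * R^2" if s: "s \<ge> 1" for s
  proof (cases "s \<ge> R \<and> b > 0")
    case True
    have "2 * b / c = ((2 * b / c) powr (1 / (2 - \<beta>))) powr (2 - \<beta>)"
      using \<beta> True c by (simp add: powr_powr)
    also have "\<dots> \<le> s powr (2 - \<beta>)"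
      using \<beta> True by (intro powr_mono2) (auto simp: R_def)
    finally have "b * s powr \<beta> * (2 * b / c) \<le> b * s powr \<beta> * s powr (2 - \<beta>)"
      using True by (intro mult_left_mono) auto
    also have "\<dots> = b * s^2"
      using s by (simp add: mult.assoc powr_add[symmetric] powr_numeral)
    finally have "b * s powr \<beta> \<le> c / 2 * s^2"
      using True c by (simp add: field_simps)
    then show ?thesis using b by (simp add: add_increasing2)
  next
    case False
    then have "b * s powr \<beta> \<le> b * R powr \<beta>"
      using s \<beta> b by (cases "b = 0") (auto intro!: mult_left_mono powr_mono2)
    also have "\<dots> \<le> b * R powr 2"
      using R1 \<beta> b by (intro mult_left_mono powr_mono) auto
    finally show ?thesis
      using c R1 by (simp add: add_increasing powr_numeral)
  qed
  then show ?thesis by blast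
qed

lemma exp_partial_sum_ge_term:
  assumes "x \<ge> (0::real)"
  shows "x^n / fact n \<le> exp x"
proof -
  have "x^n / fact n \<le> (\<Sum>m<Suc n. x^m / fact m)"
    by (rule member_le_sum) (use assms in auto)
  also have "\<dots> \<le> exp x"
    by (rule exp_partial_sum_le) fact
  finally show ?thesis .
qed

lemma powr_exp_neg_quadratic_bounded:
  fixes c r :: real
  assumes c: "c > 0"
  shows "\<exists>B. \<forall>s\<ge>1. s powr r * exp (-(c * s^2)) \<le> B"
proof -
  define n where "n = nat \<lceil>max r 0\<rceil>"
  have rn: "r \<le> real n" unfolding n_def by linarith
  have "s powr r * exp (-(c * s^2)) \<le> fact n / c^n" if s: "s \<ge> 1" for s
  proof -
    have "s powr r \<le> s powr (real n)"
      using s rn by (intro powr_mono) auto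
    then have "s powr r * exp (-(c * s^2)) \<le> s^n / exp (c * s^2)"
      using s by (simp add: exp_minus divide_inverse powr_realpow)
    also have "\<dots> \<le> s^n / ((c * s^2)^n / fact n)"
      using exp_partial_sum_ge_term[of "c * s^2" n] c s by (intro divide_left_mono) auto
    also have "\<dots> = fact n / (c^n * s^n)"
      using c s by (simp add: power_mult_distrib power_mult[symmetric] mult_2_right power_add field_simps)
    also have "\<dots> \<le> fact n / c^n"
      using c s by (intro divide_left_mono) (auto simp: mult_le_cancel_left1)
    finally show ?thesis .
  qed
  then show ?thesis by blast
qed

lemma powr_exp_bounded:
  fixes b c \<beta> r :: real
  assumes c: "c > 0" and b: "b \<ge> 0" and \<beta>: "0 \<le> \<beta>" "\<beta> < 2"
  shows "\<exists>B. \<forall>s\<ge>1. s powr r * exp (b * s powr \<beta> - c * s^2) \<le> B"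
proof -
  obtain K where K: "\<And>s. s \<ge> 1 \<Longrightarrow> b * s powr \<beta> \<le> c / 2 * s^2 + K"
    using powr_le_half_quadratic_plus_const[OF c b \<beta>] by blast
  obtain B where B: "\<And>s. s \<ge> 1 \<Longrightarrow> s powr r * exp (-(c / 2 * s^2)) \<le> B"
    using powr_exp_neg_quadratic_bounded[of "c / 2" r] c by auto
  have "s powr r * exp (b * s powr \<beta> - c * s^2) \<le> exp K * B" if s: "s \<ge> 1" for s
  proof -
    have "s powr r * exp (b * s powr \<beta> - c * s^2) \<le> s powr r * exp (K - c / 2 * s^2)"
      using K[OF s] by (intro mult_left_mono) auto
    also have "\<dots> = exp K * (s powr r * exp (-(c / 2 * s^2)))"
      by (simp flip: exp_add)
    also have "\<dots> \<le> exp K * B"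
      using B[OF s] by (intro mult_left_mono) auto
    finally show ?thesis .
  qed
  then show ?thesis by blast
qed

lemma q_exponent_eq:
  assumes "x > 0" "y > 0" "\<xi> > 0"
  shows "q_exponent y \<xi> x = 1 / (4 * y^2) + 1 / (4 * \<xi>^2) - x^2 / (8 * y^2 * \<xi>^2) - (y / \<xi> - \<xi> / y)^2 / (8 * x^2)"
  unfolding q_exponent_def pcD_arg_def using assms
  by (simp add: field_simps power2_eq_square)

lemma half_plus_sq_le_sq_diff_inverse:
  fixes u :: real
  assumes "u \<ge> 2"
  shows "1 / 2 + u^2 / 8 \<le> (u - 1 / u)^2"
proof -
  have "2 \<le> u * u" using mult_mono[of 2 u 2 u] assms by auto
  then have "1 / u \<le> u / 2" using assms by (simp add: field_simps)
  then have "(u / 2)^2 \<le> (u - 1 / u)^2"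
    using assms by (intro power_mono) auto
  moreover have "1 / 2 \<le> u^2 / 8"
    using power_mono[OF assms, of 2] by simp
  ultimately show ?thesis by (simp add: power_divide)
qed

lemma q_exponent_le:
  assumes x: "x > 0" and y: "y > 0" and \<xi>: "\<xi> > 0" and u: "u \<ge> 2" "u = \<xi> / y \<or> u = y / \<xi>"
  shows "q_exponent y \<xi> x \<le> 1 / (4 * y^2) + 1 / (4 * \<xi>^2) - 1 / (16 * x^2) - u^2 / (64 * x^2)"
proof -
  have "(y / \<xi> - \<xi> / y)^2 = (u - 1 / u)^2"
    using u by (auto simp: power2_commute)
  then have "(1 / 2 + u^2 / 8) / (8 * x^2) \<le> (y / \<xi> - \<xi> / y)^2 / (8 * x^2)"
    using half_plus_sq_le_sq_diff_inverse[OF u(1)] by (intro divide_right_mono) auto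
  moreover have "(1 / 2 + u^2 / 8) / (8 * x^2) = 1 / (16 * x^2) + u^2 / (64 * x^2)"
    using x by (simp add: field_simps)
  moreover have "0 \<le> x^2 / (8 * y^2 * \<xi>^2)" by simp
  ultimately show ?thesis
    unfolding q_exponent_eq[OF x y \<xi>] by linarith
qed

lemma max_inverse_of_ge_one: "1 \<le> \<xi> \<Longrightarrow> max \<xi> (1 / \<xi>) = (\<xi>::real)"
  by (intro max_absorb1) (simp add: order_trans[of _ 1])

lemma max_inverse_of_le_one: "0 < \<xi> \<Longrightarrow> \<xi> \<le> 1 \<Longrightarrow> max \<xi> (1 / \<xi>) = 1 / (\<xi>::real)"
  by (intro max_absorb2) (simp add: order_trans[of _ 1] field_simps)

text \<open>Outside \<open>[1/M, M]\<close> with \<open>M = 2y + 2/y + 1\<close> either \<open>\<xi>/y \<ge> 2\<close> or \<open>y/\<xi> \<ge> 2\<close>; for small \<open>\<xi>\<close> the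
  bound \<open>x \<le> y/8\<close> lets the cross term absorb \<open>1/(4\<xi>\<^sup>2)\<close>.\<close>
lemma q_exponent_le_far:
  assumes x: "0 < x" "x \<le> min 1 (y / 8)" and y: "y > 0" and \<xi>: "\<xi> \<in> EM (2 * y + 2 / y + 1)"
  shows "q_exponent y \<xi> x
    \<le> 1 / (4 * y^2) + 1 / 4 - 1 / (16 * x^2) - min (1 / (64 * y^2)) (3 / 4) * (max \<xi> (1 / \<xi>))^2"
proof -
  have x2: "x^2 \<le> 1" "64 * x^2 \<le> y^2"
    using x power_mono[of x "y / 8" 2] by (auto simp: power_le_one power_divide)
  consider "\<xi> \<ge> 2 * y + 2 / y + 1" | "0 < \<xi>" "\<xi> \<le> 1 / (2 * y + 2 / y + 1)"
    using \<xi> unfolding EM_def by auto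
  then show ?thesis
  proof cases
    case 1
    moreover have "2 / y > 0" using y by simp
    ultimately have \<xi>1: "\<xi> \<ge> 1" "\<xi> \<ge> 2 * y" "\<xi> > 0"
      using y by linarith+
    have "q_exponent y \<xi> x \<le> 1 / (4 * y^2) + 1 / (4 * \<xi>^2) - 1 / (16 * x^2) - (\<xi> / y)^2 / (64 * x^2)"
      using \<xi>1 y by (intro q_exponent_le[OF x(1) y]) (auto simp: field_simps)
    moreover have "1 / (4 * \<xi>^2) \<le> 1 / 4"
      using \<xi>1 by (simp add: field_simps one_le_power)
    moreover have "(\<xi> / y)^2 / 64 \<le> (\<xi> / y)^2 / (64 * x^2)"
      using x x2 by (intro divide_left_mono) auto
    moreover have m: "max \<xi> (1 / \<xi>) = \<xi>"
      using \<xi>1 by (simp add: max_inverse_of_ge_one)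
    moreover have "min (1 / (64 * y^2)) (3 / 4) * \<xi>^2 \<le> 1 / (64 * y^2) * \<xi>^2"
      by (intro mult_right_mono) auto
    moreover have "1 / (64 * y^2) * \<xi>^2 = (\<xi> / y)^2 / 64"
      by (simp add: power_divide)
    ultimately show ?thesis unfolding m by linarith
  next
    case 2
    have M: "2 * y + 2 / y + 1 \<ge> 2 / y" "2 * y + 2 / y + 1 \<ge> 1" using y by auto
    have "1 / (2 * y + 2 / y + 1) \<le> 1 / (2 / y)"
      using M y by (intro divide_left_mono) (auto intro!: divide_pos_pos add_pos_pos)
    moreover have "1 / (2 * y + 2 / y + 1) \<le> 1"
      using M by simp
    ultimately have \<xi>1: "\<xi> \<le> y / 2" "\<xi> \<le> 1" using 2 by auto
    have "q_exponent y \<xi> x \<le> 1 / (4 * y^2) + 1 / (4 * \<xi>^2) - 1 / (16 * x^2) - (y / \<xi>)^2 / (64 * x^2)"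
      using \<xi>1 2 y by (intro q_exponent_le[OF x(1) y]) (auto simp: field_simps)
    moreover have "(1 / \<xi>)^2 \<le> (y / \<xi>)^2 / (64 * x^2)"
      using x x2 2 by (simp add: power_divide field_simps)
    moreover have m: "max \<xi> (1 / \<xi>) = 1 / \<xi>"
      using \<xi>1 2 by (simp add: max_inverse_of_le_one)
    moreover have "min (1 / (64 * y^2)) (3 / 4) * (1 / \<xi>)^2 \<le> 3 / 4 * (1 / \<xi>)^2"
      by (intro mult_right_mono) auto
    moreover have "1 / (4 * \<xi>^2) = 1 / 4 * (1 / \<xi>)^2"
      by (simp add: power_divide)
    ultimately show ?thesis unfolding m by linarith
  qed
qed

lemma powr_le_max_inverse_powr_abs:
  assumes "\<xi> > (0::real)"
  shows "\<xi> powr r \<le> max \<xi> (1 / \<xi>) powr \<bar>r\<bar>"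
proof (cases "\<xi> \<ge> 1")
  case True
  then have "max \<xi> (1 / \<xi>) = \<xi>"
    by (rule max_inverse_of_ge_one)
  with True show ?thesis by (simp add: powr_mono)
next
  case False
  then have "\<xi> powr r = (1 / \<xi>) powr (-r)" "1 / \<xi> \<ge> 1"
    using assms by (auto simp: powr_divide powr_minus_divide field_simps)
  moreover have "max \<xi> (1 / \<xi>) = 1 / \<xi>"
    using assms False by (simp add: max_inverse_of_le_one)
  ultimately show ?thesis by (simp add: powr_mono)
qed

lemma powr_minus_plus_powr_le:
  assumes "\<xi> > (0::real)" "\<beta> \<ge> 0"
  shows "\<xi> powr (-\<beta>) + \<xi> powr \<beta> \<le> 1 + max \<xi> (1 / \<xi>) powr \<beta>"
proof (cases "\<xi> \<ge> 1")
  case True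
  then have "\<xi> powr (-\<beta>) \<le> 1"
    using assms by (simp add: powr_minus_divide ge_one_powr_ge_zero)
  moreover have "max \<xi> (1 / \<xi>) = \<xi>"
    using True by (rule max_inverse_of_ge_one)
  ultimately show ?thesis by simp
next
  case False
  then have "\<xi> powr \<beta> \<le> 1" "\<xi> powr (-\<beta>) = (1 / \<xi>) powr \<beta>" "1 / \<xi> \<ge> 1"
    using assms by (auto simp: powr_le1 powr_divide powr_minus_divide field_simps)
  moreover have "max \<xi> (1 / \<xi>) = 1 / \<xi>"
    using assms False by (simp add: max_inverse_of_le_one)
  ultimately show ?thesis by simp
qed

lemma mem_EM_pos: "0 < M \<Longrightarrow> \<xi> \<in> EM M \<Longrightarrow> 0 < \<xi>"
  unfolding EM_def by auto

lemma inverse_sq_max_inverse_le: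
  assumes "\<xi> > (0::real)"
  shows "1 / (max \<xi> (1 / \<xi>))^2 \<le> min 1 (1 / \<xi>^2)"
proof (cases "\<xi> \<ge> 1")
  case True
  then show ?thesis by (simp add: max_inverse_of_ge_one power_le_one_iff)
next
  case False
  then show ?thesis using assms by (simp add: max_inverse_of_le_one power_le_one field_simps)
qed

lemma qterm_weighted_bound:
  fixes y b2 \<beta> e r :: real
  assumes y: "y > 0" and b2: "b2 \<ge> 0" and \<beta>: "0 \<le> \<beta>" "\<beta> < 2"
  shows "\<exists>K\<ge>0. \<forall>x \<xi>. 0 < x \<longrightarrow> x \<le> min 1 (y / 8) \<longrightarrow> \<xi> \<in> EM (2 * y + 2 / y + 1) \<longrightarrow>
     x powr e * \<xi> powr r * exp (q_exponent y \<xi> x + b2 * (\<xi> powr (-\<beta>) + \<xi> powr \<beta>)) \<le> K * min 1 (1 / \<xi>^2)"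
proof -
  define c where "c = min (1 / (64 * y^2)) (3 / 4)"
  define A where "A = 1 / (4 * y^2) + 1 / 4 + b2"
  have c: "c > 0" using y by (simp add: c_def)
  obtain B1 where B1: "\<And>s. s \<ge> 1 \<Longrightarrow> s powr (-e) * exp (0 * s powr 0 - 1 / 16 * s^2) \<le> B1"
    using powr_exp_bounded[of "1 / 16" 0 0 "-e"] by auto
  obtain B2 where B2: "\<And>s. s \<ge> 1 \<Longrightarrow> s powr (\<bar>r\<bar> + 2) * exp (b2 * s powr \<beta> - c * s^2) \<le> B2"
    using powr_exp_bounded[OF c b2 \<beta>] by blast
  have "B1 \<ge> 0" "B2 \<ge> 0"
    using B1[of 1] B2[of 1] by (auto intro: order_trans[rotated])
  define K where "K = exp A * B1 * B2"
  have "x powr e * \<xi> powr r * exp (q_exponent y \<xi> x + b2 * (\<xi> powr (-\<beta>) + \<xi> powr \<beta>)) \<le> K * min 1 (1 / \<xi>^2)"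
    if x: "0 < x" "x \<le> min 1 (y / 8)" and \<xi>: "\<xi> \<in> EM (2 * y + 2 / y + 1)" for x \<xi>
  proof -
    \<comment> \<open>The Gaussian decay in \<open>1/x\<close> absorbs \<open>x powr e\<close>; that in \<open>s\<close> absorbs \<open>\<xi> powr r\<close> and leaves \<open>s\<^sup>-\<^sup>2\<close>.\<close>
    define s where "s = max \<xi> (1 / \<xi>)"
    have \<xi>0: "\<xi> > 0" using \<xi> y by (intro mem_EM_pos[OF _ \<xi>]) (simp add: add_pos_pos)
    then have s: "s \<ge> 1"
      by (cases "\<xi> \<ge> 1") (simp_all add: s_def max_inverse_of_ge_one max_inverse_of_le_one)
    have X: "x powr e * exp (- (1 / (16 * x^2))) \<le> B1"
      using B1[of "1 / x"] x by (simp add: powr_divide powr_minus_divide field_simps)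
    have "s powr \<bar>r\<bar> * exp (b2 * s powr \<beta> - c * s^2) * s^2 \<le> B2"
      using B2[OF s] s by (simp add: powr_add powr_numeral mult_ac)
    then have S: "s powr \<bar>r\<bar> * exp (b2 * s powr \<beta> - c * s^2) \<le> B2 / s^2"
      using s by (simp add: field_simps)
    have "q_exponent y \<xi> x + b2 * (\<xi> powr (-\<beta>) + \<xi> powr \<beta>) \<le> A + (- (1 / (16 * x^2))) + (b2 * s powr \<beta> - c * s^2)"
      using q_exponent_le_far[OF x y \<xi>] mult_left_mono[OF powr_minus_plus_powr_le[OF \<xi>0 \<beta>(1)] b2]
      unfolding A_def c_def s_def by (simp add: algebra_simps)
    then have "x powr e * \<xi> powr r * exp (q_exponent y \<xi> x + b2 * (\<xi> powr (-\<beta>) + \<xi> powr \<beta>))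
        \<le> x powr e * s powr \<bar>r\<bar> * exp (A + (- (1 / (16 * x^2))) + (b2 * s powr \<beta> - c * s^2))"
      using powr_le_max_inverse_powr_abs[OF \<xi>0, of r] unfolding s_def[symmetric]
      by (intro mult_mono) auto
    also have "\<dots> = exp A * (x powr e * exp (- (1 / (16 * x^2)))) * (s powr \<bar>r\<bar> * exp (b2 * s powr \<beta> - c * s^2))"
      by (simp add: mult_ac flip: exp_add)
    also have "\<dots> \<le> exp A * B1 * (B2 / s^2)"
      using X S \<open>B1 \<ge> 0\<close> by (intro mult_mono mult_left_mono) auto
    also have "\<dots> \<le> K * min 1 (1 / \<xi>^2)"
      using inverse_sq_max_inverse_le[OF \<xi>0] \<open>B1 \<ge> 0\<close> \<open>B2 \<ge> 0\<close>
      unfolding K_def s_def[symmetric] by (simp add: divide_inverse mult_left_mono)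
    finally show ?thesis .
  qed
  moreover have "K \<ge> 0" using \<open>B1 \<ge> 0\<close> \<open>B2 \<ge> 0\<close> by (simp add: K_def)
  ultimately show ?thesis by blast
qed

lemma sum_list_dominated:
  fixes F :: "'a \<Rightarrow> 'b \<Rightarrow> real"
  assumes "\<And>t. t \<in> set L \<Longrightarrow> \<exists>K\<ge>0. \<forall>z\<in>S. F t z \<le> K * g z"
  shows "\<exists>K\<ge>0. \<forall>z\<in>S. (\<Sum>t\<leftarrow>L. F t z) \<le> K * g z"
  using assms
proof (induction L)
  case Nil
  show ?case by (intro exI[of _ 0]) simp
next
  case (Cons t L)
  obtain Kt where "Kt \<ge> 0" "\<forall>z\<in>S. F t z \<le> Kt * g z" using Cons.prems by force
  moreover obtain KL where "KL \<ge> 0" "\<forall>z\<in>S. (\<Sum>t\<leftarrow>L. F t z) \<le> KL * g z" using Cons by force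
  ultimately show ?case
    by (intro exI[of _ "Kt + KL"]) (auto simp: distrib_right intro: add_mono)
qed

lemma qterms_majorant_weighted_bound:
  fixes y b2 \<beta> \<rho> \<nu> :: real
  assumes y: "y > 0" and b2: "b2 \<ge> 0" and \<beta>: "0 \<le> \<beta>" "\<beta> < 2" and \<nu>: "\<nu> < 1"
  shows "\<exists>K\<ge>0. \<forall>x \<xi>. 0 < x \<longrightarrow> x \<le> min 1 (y / 8) \<longrightarrow> \<xi> \<in> EM (2 * y + 2 / y + 1) \<longrightarrow>
     qterms_majorant \<nu> y \<xi> L x * (\<xi> powr \<rho> * exp (b2 * (\<xi> powr (-\<beta>) + \<xi> powr \<beta>))) \<le> K * min 1 (1 / \<xi>^2)"
proof -
  define S where "S = {(x, \<xi>). 0 < x \<and> x \<le> min 1 (y / 8) \<and> \<xi> \<in> EM (2 * y + 2 / y + 1)}"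
  define F where "F = (\<lambda>(c, e, j, k) (x, \<xi>). \<bar>c\<bar> * gauss_laplace \<nu> k 0 *
     (x powr e * \<xi> powr (j + \<rho>) * exp (q_exponent y \<xi> x + b2 * (\<xi> powr (-\<beta>) + \<xi> powr \<beta>))))"
  have "\<exists>K\<ge>0. \<forall>z\<in>S. F t z \<le> K * (\<lambda>(x, \<xi>). min 1 (1 / \<xi>^2)) z" for t :: qterm
  proof -
    obtain c e j k where t: "t = (c, e, j, k)" by (cases t) auto
    obtain K where "K \<ge> 0" and K: "\<forall>x \<xi>. 0 < x \<longrightarrow> x \<le> min 1 (y / 8) \<longrightarrow> \<xi> \<in> EM (2 * y + 2 / y + 1) \<longrightarrow>
        x powr e * \<xi> powr (j + \<rho>) * exp (q_exponent y \<xi> x + b2 * (\<xi> powr (-\<beta>) + \<xi> powr \<beta>)) \<le> K * min 1 (1 / \<xi>^2)"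
      using qterm_weighted_bound[OF y b2 \<beta>] by blast
    show ?thesis
      using K \<open>K \<ge> 0\<close> gauss_laplace_nonneg[OF \<nu>, of k 0]
      by (intro exI[of _ "\<bar>c\<bar> * gauss_laplace \<nu> k 0 * K"])
        (auto simp: S_def F_def t mult.assoc intro!: mult_left_mono)
  qed
  then obtain K where "K \<ge> 0" and K: "\<forall>z\<in>S. (\<Sum>t\<leftarrow>L. F t z) \<le> K * (\<lambda>(x, \<xi>). min 1 (1 / \<xi>^2)) z"
    using sum_list_dominated[of L S F] by blast
  show ?thesis
  proof (intro exI[of _ K] conjI allI impI)
    fix x \<xi> :: real
    assume x: "0 < x" "x \<le> min 1 (y / 8)" and \<xi>: "\<xi> \<in> EM (2 * y + 2 / y + 1)"
    then have "\<xi> > 0" using y by (intro mem_EM_pos[OF _ \<xi>]) (simp add: add_pos_pos)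
    then have "qterms_majorant \<nu> y \<xi> L x * (\<xi> powr \<rho> * exp (b2 * (\<xi> powr (-\<beta>) + \<xi> powr \<beta>)))
        = (\<Sum>t\<leftarrow>L. F t (x, \<xi>))"
      unfolding qterms_majorant_def sum_list_mult_const[symmetric] F_def
      by (intro arg_cong[where f = sum_list] map_cong) (auto simp: powr_add exp_add)
    also have "\<dots> \<le> K * min 1 (1 / \<xi>^2)"
      using K x \<xi> by (auto simp: S_def)
    finally show "qterms_majorant \<nu> y \<xi> L x * (\<xi> powr \<rho> * exp (b2 * (\<xi> powr (-\<beta>) + \<xi> powr \<beta>)))
        \<le> K * min 1 (1 / \<xi>^2)" .
  qed fact
qed

lemma qq_higher_deriv_dominated:
  fixes \<alpha> y :: real and f :: "real \<Rightarrow> real" and p :: nat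
  assumes \<alpha>: "\<alpha> < 1/2" and y: "y > 0" and f: "f \<in> classE"
  shows "\<exists>C\<ge>0. \<forall>x \<xi>. 0 < x \<longrightarrow> x \<le> min 1 (y / 8) \<longrightarrow> \<xi> \<in> EM (2 * y + 2 / y + 1) \<longrightarrow>
     \<bar>f \<xi>\<bar> * \<bar>(deriv ^^ p) (\<lambda>t. qq \<alpha> t y \<xi>) x\<bar> * mm \<alpha> \<xi> \<le> C * min 1 (1 / \<xi>^2)"
proof -
  obtain b1 b2 \<beta> where b: "b1 \<ge> 0" "b2 \<ge> 0" "0 \<le> \<beta>" "\<beta> < 2"
    and f_le: "\<And>x. x > 0 \<Longrightarrow> \<bar>f x\<bar> \<le> b1 * exp (1 / (2 * x^2) + b2 * (x powr (-\<beta>) + x powr \<beta>))"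
    using f unfolding classE_def by blast
  have \<nu>: "2 * \<alpha> < 1" using \<alpha> by simp
  define L where "L = (qterms_deriv y ^^ p) (q_terms \<alpha> y)"
  obtain K where "K \<ge> 0" and K: "\<forall>x \<xi>. 0 < x \<longrightarrow> x \<le> min 1 (y / 8) \<longrightarrow> \<xi> \<in> EM (2 * y + 2 / y + 1) \<longrightarrow>
      qterms_majorant (2 * \<alpha>) y \<xi> L x * (\<xi> powr (1 - 4 * \<alpha>) * exp (b2 * (\<xi> powr (-\<beta>) + \<xi> powr \<beta>)))
        \<le> K * min 1 (1 / \<xi>^2)"
    using qterms_majorant_weighted_bound[OF y b(2-4) \<nu>] by blast
  have "\<bar>f \<xi>\<bar> * \<bar>(deriv ^^ p) (\<lambda>t. qq \<alpha> t y \<xi>) x\<bar> * mm \<alpha> \<xi> \<le> b1 * K * min 1 (1 / \<xi>^2)"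
    if x: "0 < x" "x \<le> min 1 (y / 8)" and \<xi>: "\<xi> \<in> EM (2 * y + 2 / y + 1)" for x \<xi>
  proof -
    have \<xi>0: "\<xi> > 0" using y by (intro mem_EM_pos[OF _ \<xi>]) (simp add: add_pos_pos)
    have "(deriv ^^ p) (\<lambda>t. qq \<alpha> t y \<xi>) x = qterms_val (2 * \<alpha>) y \<xi> L x"
      unfolding L_def using y \<xi>0 \<nu> x(1) by (rule higher_deriv_qterms_val) (simp add: qq_eq_qterms_val[OF \<alpha> _ y \<xi>0])
    then have D: "\<bar>(deriv ^^ p) (\<lambda>t. qq \<alpha> t y \<xi>) x\<bar> \<le> qterms_majorant (2 * \<alpha>) y \<xi> L x"
      using abs_qterms_val_le_majorant[OF x(1) y \<xi>0 \<nu>] by simp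
    have "\<bar>f \<xi>\<bar> * \<bar>(deriv ^^ p) (\<lambda>t. qq \<alpha> t y \<xi>) x\<bar> * mm \<alpha> \<xi>
        \<le> b1 * exp (1 / (2 * \<xi>^2) + b2 * (\<xi> powr (-\<beta>) + \<xi> powr \<beta>)) * qterms_majorant (2 * \<alpha>) y \<xi> L x * mm \<alpha> \<xi>"
      using f_le[OF \<xi>0] D b(1) by (intro mult_right_mono mult_mono) (auto simp: mm_def)
    also have "\<dots> = b1 * (qterms_majorant (2 * \<alpha>) y \<xi> L x * (\<xi> powr (1 - 4 * \<alpha>) * exp (b2 * (\<xi> powr (-\<beta>) + \<xi> powr \<beta>))))"
      by (simp add: mm_def mult_ac flip: exp_add)
    also have "\<dots> \<le> b1 * (K * min 1 (1 / \<xi>^2))"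
      using K x \<xi> b(1) by (intro mult_left_mono) auto
    finally show ?thesis by simp
  qed
  then show ?thesis
    using \<open>K \<ge> 0\<close> b(1) by (intro exI[of _ "b1 * K"]) auto
qed

section \<open>Integration over \<open>E\<^sub>M\<close>\<close>

lemma EM_antimono:
  assumes "0 < M'" "M' \<le> M"
  shows "EM M \<subseteq> EM M'"
proof -
  have "1 / M \<le> 1 / M'" using assms by (intro divide_left_mono) auto
  then show ?thesis using assms by (auto simp: EM_def)
qed

lemma nn_integral_EM_le:
  fixes M C :: real
  assumes M: "M \<ge> 1" and C: "C \<ge> 0"
  shows "(\<integral>\<^sup>+ \<xi>\<in>EM M. ennreal (C * min 1 (1 / \<xi>^2)) \<partial>lebesgue) \<le> ennreal (2 * C / M)"
proof -
  have le: "ennreal (C * min 1 (1 / \<xi>^2)) * indicator (EM M) \<xi>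
      \<le> ennreal C * indicator {0<..1/M} \<xi> + ennreal (C / \<xi>^2) * indicator {M..} \<xi>" for \<xi>
    using M C by (auto simp: EM_def indicator_def mult_left_le intro!: ennreal_leI mult_left_mono)
  have "(\<integral>\<^sup>+ \<xi>\<in>EM M. ennreal (C * min 1 (1 / \<xi>^2)) \<partial>lebesgue)
      = (\<integral>\<^sup>+ \<xi>. ennreal (C * min 1 (1 / \<xi>^2)) * indicator (EM M) \<xi> \<partial>lborel)"
    by (simp add: nn_integral_completion)
  also have "\<dots> \<le> (\<integral>\<^sup>+ \<xi>. ennreal C * indicator {0<..1/M} \<xi> + ennreal (C / \<xi>^2) * indicator {M..} \<xi> \<partial>lborel)"
    by (intro nn_integral_mono le)
  also have "\<dots> = ennreal C * emeasure lborel {0<..1/M} + (\<integral>\<^sup>+ \<xi>. ennreal (C / \<xi>^2) * indicator {M..} \<xi> \<partial>lborel)"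
    by (subst nn_integral_add) (auto simp: nn_integral_cmult_indicator)
  also have "(\<integral>\<^sup>+ \<xi>. ennreal (C / \<xi>^2) * indicator {M..} \<xi> \<partial>lborel) = ennreal (0 - (- C / M))"
  proof (rule nn_integral_FTC_atLeast)
    fix x :: real assume "M \<le> x"
    then have "x > 0" using M by simp
    then show "((\<lambda>\<xi>. - C / \<xi>) has_real_derivative C / x^2) (at x)"
      by (auto intro!: derivative_eq_intros simp: power2_eq_square)
    show "0 \<le> C / x^2" using C by simp
  next
    show "((\<lambda>\<xi>::real. - C / \<xi>) \<longlongrightarrow> 0) at_top"
      by (intro tendsto_divide_0[OF tendsto_const] filterlim_at_top_imp_at_infinity filterlim_ident)
  qed simp
  also have "ennreal C * emeasure lborel {0<..1/M} + ennreal (0 - (- C / M)) = ennreal (2 * C / M)"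
    using M C by (simp add: ennreal_mult[symmetric] flip: ennreal_plus)
  finally show ?thesis by simp
qed

lemma nn_integral_EM_dominated_le:
  fixes g :: "real \<Rightarrow> real"
  assumes "0 < M'" "M' \<le> M" "1 \<le> M" "C \<ge> 0" and g: "\<And>\<xi>. \<xi> \<in> EM M' \<Longrightarrow> g \<xi> \<le> C * min 1 (1 / \<xi>^2)"
  shows "(\<integral>\<^sup>+ \<xi>\<in>EM M. ennreal (g \<xi>) \<partial>lebesgue) \<le> ennreal (2 * C / M)"
proof -
  have "(\<integral>\<^sup>+ \<xi>\<in>EM M. ennreal (g \<xi>) \<partial>lebesgue) \<le> (\<integral>\<^sup>+ \<xi>\<in>EM M. ennreal (C * min 1 (1 / \<xi>^2)) \<partial>lebesgue)"
    using EM_antimono[OF assms(1,2)] g by (intro nn_integral_mono) (auto simp: indicator_def intro!: ennreal_leI)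
  also have "\<dots> \<le> ennreal (2 * C / M)"
    using assms by (intro nn_integral_EM_le) auto
  finally show ?thesis .
qed

theorem mainTheorem7:
  fixes \<alpha> y :: real and f :: "real \<Rightarrow> real" and p :: nat
  assumes "\<alpha> < 1/2" and "y > 0" and "f \<in> classE"
  shows "\<forall>\<epsilon>>0. \<exists>\<delta>>0. \<exists>M0>0. \<forall>x\<in>{0<..\<delta>}. \<forall>M\<ge>M0.
           (\<integral>\<^sup>+ \<xi>\<in>EM M. ennreal (\<bar>f \<xi>\<bar> * \<bar>(deriv ^^ p) (\<lambda>t. qq \<alpha> t y \<xi>) x\<bar> * mm \<alpha> \<xi>) \<partial>lebesgue)
             < ennreal \<epsilon>"
proof (intro allI impI)
  fix \<epsilon> :: real assume \<epsilon>: "\<epsilon> > 0"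
  define M1 where "M1 = 2 * y + 2 / y + 1"
  have M1: "M1 \<ge> 1" using \<open>y > 0\<close> by (simp add: M1_def)
  obtain C where C: "C \<ge> 0" and dom: "\<forall>x \<xi>. 0 < x \<longrightarrow> x \<le> min 1 (y / 8) \<longrightarrow> \<xi> \<in> EM M1 \<longrightarrow>
      \<bar>f \<xi>\<bar> * \<bar>(deriv ^^ p) (\<lambda>t. qq \<alpha> t y \<xi>) x\<bar> * mm \<alpha> \<xi> \<le> C * min 1 (1 / \<xi>^2)"
    using qq_higher_deriv_dominated[OF assms] unfolding M1_def by blast
  have "(\<integral>\<^sup>+ \<xi>\<in>EM M. ennreal (\<bar>f \<xi>\<bar> * \<bar>(deriv ^^ p) (\<lambda>t. qq \<alpha> t y \<xi>) x\<bar> * mm \<alpha> \<xi>) \<partial>lebesgue)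
      \<le> ennreal (2 * C / M)" if "x \<in> {0<..min 1 (y / 8)}" "M \<ge> max M1 (2 * C / \<epsilon> + 1)" for x M
    using that dom M1 C by (intro nn_integral_EM_dominated_le[of M1]) auto
  moreover have "ennreal (2 * C / M) < ennreal \<epsilon>" if "M \<ge> max M1 (2 * C / \<epsilon> + 1)" for M
    using that M1 C \<epsilon> by (intro ennreal_lessI) (auto simp: field_simps)
  moreover have "min 1 (y / 8) > 0" "max M1 (2 * C / \<epsilon> + 1) > 0"
    using \<open>y > 0\<close> M1 by auto
  ultimately show "\<exists>\<delta>>0. \<exists>M0>0. \<forall>x\<in>{0<..\<delta>}. \<forall>M\<ge>M0.
      (\<integral>\<^sup>+ \<xi>\<in>EM M. ennreal (\<bar>f \<xi>\<bar> * \<bar>(deriv ^^ p) (\<lambda>t. qq \<alpha> t y \<xi>) x\<bar> * mm \<alpha> \<xi>) \<partial>lebesgue) < ennreal \<epsilon>"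
    by (blast intro: le_less_trans)
qed

end
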